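(* Let $A=\sigma(R)\langle x_1,\dots,x_n\rangle$ be a quasi-commutative bijective $\sigma$-PBW extension of $R$ (under the standing assumptions below). Then every submodule of $A^m$ has a Gröbner basis.
   Context: Let $R\subseteq A$ be rings. $A$ is a $\sigma$-PBW extension of $R$, written $A=\sigma(R)\langle x_1,\dots,x_n\rangle$, if there are $x_1,\dots,x_n\in A\setminus R$ such that: (i) $A$ is a free left $R$-module with basis $\mathrm{Mon}(A)=\{x^\alpha=x_1^{\alpha_1}\cdots x_n^{\alpha_n}:\alpha\in\mathbb N^n\}$, with $x^0=1$; (ii) for every $i$ and every $r\in R\setminus\{0\}$ there is $c_{i,r}\in R\setminus\{0\}$ with $x_ir-c_{i,r}x_i\in R$; (iii) for all $i,j$ there is $c_{i,j}\in R\setminus\{0\}$ with $x_jx_i-c_{i,j}x_ix_j\in R+Rx_1+\dots+Rx_n$. There are injective ring endomorphisms $\sigma_i$ of $R$ and $\sigma_i$-derivations $\delta_i$ with $x_ir=\sigma_i(r)x_i+\delta_i(r)$. Write $\sigma^\alpha=\sigma_1^{\alpha_1}\circ\cdots\circ\sigma_n^{\alpha_n}$ and $|\alpha|=\sum\alpha_i$. For $\alpha,\beta$ there are unique $c_{\alpha,\beta}\in R$ (left invertible) and $p_{\alpha,\beta}\in A$ with $x^\alpha x^\beta=c_{\alpha,\beta}x^{\alpha+\beta}+p_{\alpha,\beta}$, where $p_{\alpha,\beta}=0$ or $\deg p_{\alpha,\beta}<|\alpha+\beta|$. $A$ is quasi-commutative if $x_ir=c_{i,r}x_i$ and $x_jx_i=c_{i,j}x_ix_j$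 exactly. $A$ is bijective if each $\sigma_i$ is bijective and $c_{i,j}$ is invertible for $i<j$. Standing assumptions: $R$ is left Gröbner soluble (left Noetherian; left ideal membership decidable with computable coefficients; finite generating sets of left syzygy modules computable). $\mathrm{Mon}(A)$ carries a monomial order, i.e. a total order $\succeq$ with: (a) $x^\beta\succeq x^\alpha\Rightarrow lm(x^\gamma x^\beta x^\lambda)\succeq lm(x^\gamma x^\alpha x^\lambda)$; (b) $x^\alpha\succeq1$; (c) $|\beta|\ge|\alpha|\Rightarrow x^\beta\succeq x^\alpha$. $A^m$ is the free left $A$-module of column vectors with canonical basis $\mathbf e_i$. Monomials of $A^m$ are $x^\alpha\mathbf e_i$, with $\mathrm{ind}=i$, $\exp=\alpha$, $\deg=|\alpha|$. The monomial $x^\alpha\mathbf e_i$ divides $x^\beta\mathbf e_j$ iff $i=j$ and $\beta_k\ge\alpha_k$ for all $k$. $\mathrm{Mon}(A^m)$ carries a monomial order, i.e. a total order with: (i) $lm(x^\beta x^\alpha)\mathbf e_i\succeq x^\alpha\mathbf e_i$; (ii) $x^\beta\mathbf e_j\succeq x^\alpha\mathbf e_i\Rightarrow lm(x^\gamma x^\beta)\mathbf e_j\succeq lm(x^\gamma x^\alpha)\mathbf e_i$; (iii) $\deg\mathbf X\ge\deg\mathbf Y\Rightarrow\mathbf X\succeq\mathbf Y$. For nonzero $\mathbf f$, $lm(\mathbf f)$ and $lc(\mathbf f)$ denote its leading monomial and leading coefficient. Reduction. Let $F$ be a finite set of nonzero vectors and $\mathbf f\in A^m$. A one-step reduction of $\mathbf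 f$ by $F$ exists if there are $\mathbf f_1,\dots,\mathbf f_t\in F$ and $r_1,\dots,r_t\in R$ with: (1) $lm(\mathbf f_i)\mid lm(\mathbf f)$, with $\alpha_i+\exp(lm\,\mathbf f_i)=\exp(lm\,\mathbf f)$; (2) $lc(\mathbf f)=\sum r_i\sigma^{\alpha_i}(lc\,\mathbf f_i)c_{\alpha_i,\exp(lm\,\mathbf f_i)}$. $\mathbf f$ is reducible w.r.t. $F$ if such a reduction exists. Gröbner basis. For a submodule $M\neq0$ of $A^m$, a nonempty finite set $G$ of nonzero vectors of $M$ is a Gröbner basis for $M$ if every nonzero $\mathbf f\in M$ is reducible w.r.t. $G$; $\{0\}$ is a Gröbner basis of $M=0$. *)

theory Defs
  imports Main
begin

text \<open>
  The ring A is the whole type 'a (of class ring_1); R is a subset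
  of it which is a subring. The variables x_1,...,x_n are x 0, ..., x (n-1).
  Exponent vectors are functions nat => nat vanishing from n on. Vectors of A^m
  are functions nat => 'a vanishing from m on; e_i for i < m.
\<close>

type_synonym expo = "nat \<Rightarrow> nat"

definition subring :: "'a::ring_1 set \<Rightarrow> bool" where
  "subring R \<longleftrightarrow> 0 \<in> R \<and> 1 \<in> R \<and> (\<forall>a\<in>R. \<forall>b\<in>R. a + b \<in> R \<and> a - b \<in> R \<and> a * b \<in> R)"

definition exps :: "nat \<Rightarrow> expo set" where
  "exps n = {\<alpha>. \<forall>i\<ge>n. \<alpha> i = 0}"

definition tdeg :: "nat \<Rightarrow> expo \<Rightarrow> nat" where
  "tdeg n \<alpha> = (\<Sum>i<n. \<alpha> i)"

definition mono :: "(nat \<Rightarrow> 'a::ring_1) \<Rightarrow> nat \<Rightarrow> expo \<Rightarrow> 'a" where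
  "mono x n \<alpha> = foldr (\<lambda>i p. x i ^ \<alpha> i * p) [0..<n] 1"

text \<open>c represents a in the left R-basis Mon(A).\<close>
definition repr :: "'a::ring_1 set \<Rightarrow> (nat \<Rightarrow> 'a) \<Rightarrow> nat \<Rightarrow> 'a \<Rightarrow> (expo \<Rightarrow> 'a) \<Rightarrow> bool" where
  "repr R x n a c \<longleftrightarrow> finite {\<alpha>. c \<alpha> \<noteq> 0} \<and> (\<forall>\<alpha>. c \<alpha> \<in> R) \<and>
      (\<forall>\<alpha>. c \<alpha> \<noteq> 0 \<longrightarrow> \<alpha> \<in> exps n) \<and>
      a = (\<Sum>\<alpha>\<in>{\<alpha>. c \<alpha> \<noteq> 0}. c \<alpha> * mono x n \<alpha>)"

definition coeffA :: "'a::ring_1 set \<Rightarrow> (nat \<Rightarrow> 'a) \<Rightarrow> nat \<Rightarrow> 'a \<Rightarrow> expo \<Rightarrow> 'a" where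
  "coeffA R x n a = (THE c. repr R x n a c)"

definition suppA :: "'a::ring_1 set \<Rightarrow> (nat \<Rightarrow> 'a) \<Rightarrow> nat \<Rightarrow> 'a \<Rightarrow> expo set" where
  "suppA R x n a = {\<alpha>. coeffA R x n a \<alpha> \<noteq> 0}"

definition degA :: "'a::ring_1 set \<Rightarrow> (nat \<Rightarrow> 'a) \<Rightarrow> nat \<Rightarrow> 'a \<Rightarrow> nat" where
  "degA R x n a = Max (tdeg n ` suppA R x n a)"

definition lin1 :: "'a::ring_1 set \<Rightarrow> (nat \<Rightarrow> 'a) \<Rightarrow> nat \<Rightarrow> 'a set" where
  "lin1 R x n = {r0 + (\<Sum>k<n. r k * x k) | r0 r. r0 \<in> R \<and> (\<forall>k. r k \<in> R)}"

definition sigma_PBW :: "'a::ring_1 set \<Rightarrow> (nat \<Rightarrow> 'a) \<Rightarrow> nat \<Rightarrow> bool" where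
  "sigma_PBW R x n \<longleftrightarrow> subring R \<and> (\<forall>i<n. x i \<notin> R) \<and>
     (\<forall>a. \<exists>!c. repr R x n a c) \<and>
     (\<forall>i<n. \<forall>r\<in>R - {0}. \<exists>c\<in>R - {0}. x i * r - c * x i \<in> R) \<and>
     (\<forall>i<n. \<forall>j<n. \<exists>c\<in>R - {0}. x j * x i - c * x i * x j \<in> lin1 R x n)"

definition quasi_commutative :: "'a::ring_1 set \<Rightarrow> (nat \<Rightarrow> 'a) \<Rightarrow> nat \<Rightarrow> bool" where
  "quasi_commutative R x n \<longleftrightarrow>
     (\<forall>i<n. \<forall>r\<in>R - {0}. \<exists>c\<in>R - {0}. x i * r = c * x i) \<and>
     (\<forall>i<n. \<forall>j<n. \<exists>c\<in>R - {0}. x j * x i = c * x i * x j)"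

definition sigmaA :: "'a::ring_1 set \<Rightarrow> (nat \<Rightarrow> 'a) \<Rightarrow> nat \<Rightarrow> 'a \<Rightarrow> 'a" where
  "sigmaA R x i r = (THE c. c \<in> R \<and> x i * r - c * x i \<in> R)"

definition cvar :: "'a::ring_1 set \<Rightarrow> (nat \<Rightarrow> 'a) \<Rightarrow> nat \<Rightarrow> nat \<Rightarrow> nat \<Rightarrow> 'a" where
  "cvar R x n i j = (THE c. c \<in> R - {0} \<and> x j * x i - c * x i * x j \<in> lin1 R x n)"

definition invertible_in :: "'a::ring_1 set \<Rightarrow> 'a \<Rightarrow> bool" where
  "invertible_in R c \<longleftrightarrow> (\<exists>u\<in>R. u * c = 1 \<and> c * u = 1)"

definition bijective_ext :: "'a::ring_1 set \<Rightarrow> (nat \<Rightarrow> 'a) \<Rightarrow> nat \<Rightarrow> bool" where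
  "bijective_ext R x n \<longleftrightarrow> (\<forall>i<n. bij_betw (sigmaA R x i) R R) \<and>
     (\<forall>i j. i < j \<and> j < n \<longrightarrow> invertible_in R (cvar R x n i j))"

definition sigma_pow :: "'a::ring_1 set \<Rightarrow> (nat \<Rightarrow> 'a) \<Rightarrow> nat \<Rightarrow> expo \<Rightarrow> 'a \<Rightarrow> 'a" where
  "sigma_pow R x n \<alpha> = foldr (\<lambda>i g. (sigmaA R x i ^^ \<alpha> i) \<circ> g) [0..<n] id"

definition cab :: "'a::ring_1 set \<Rightarrow> (nat \<Rightarrow> 'a) \<Rightarrow> nat \<Rightarrow> expo \<Rightarrow> expo \<Rightarrow> 'a" where
  "cab R x n \<alpha> \<beta> = (THE c. c \<in> R \<and>
     (let p = mono x n \<alpha> * mono x n \<beta> - c * mono x n (\<lambda>k. \<alpha> k + \<beta> k)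
      in p = 0 \<or> degA R x n p < tdeg n (\<lambda>k. \<alpha> k + \<beta> k)))"

definition left_ideal :: "'a::ring_1 set \<Rightarrow> 'a set \<Rightarrow> bool" where
  "left_ideal R I \<longleftrightarrow> I \<subseteq> R \<and> 0 \<in> I \<and> (\<forall>a\<in>I. \<forall>b\<in>I. a + b \<in> I) \<and>
     (\<forall>r\<in>R. \<forall>a\<in>I. r * a \<in> I)"

definition left_noetherian :: "'a::ring_1 set \<Rightarrow> bool" where
  "left_noetherian R \<longleftrightarrow> (\<forall>I. left_ideal R I \<longrightarrow>
     (\<exists>S. finite S \<and> S \<subseteq> I \<and> I = {\<Sum>s\<in>S. r s * s | r. \<forall>s. r s \<in> R}))"

text \<open>Leading monomial of a nonzero element of A w.r.t. an order le on exponents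
  (le a b means x^b is above-or-equal x^a).\<close>
definition lmA :: "'a::ring_1 set \<Rightarrow> (nat \<Rightarrow> 'a) \<Rightarrow> nat \<Rightarrow> (expo \<Rightarrow> expo \<Rightarrow> bool) \<Rightarrow> 'a \<Rightarrow> expo" where
  "lmA R x n le a = (THE \<alpha>. \<alpha> \<in> suppA R x n a \<and> (\<forall>\<beta>\<in>suppA R x n a. le \<beta> \<alpha>))"

definition total_order_on :: "'b set \<Rightarrow> ('b \<Rightarrow> 'b \<Rightarrow> bool) \<Rightarrow> bool" where
  "total_order_on S le \<longleftrightarrow> (\<forall>a\<in>S. le a a) \<and>
     (\<forall>a\<in>S. \<forall>b\<in>S. le a b \<and> le b a \<longrightarrow> a = b) \<and>
     (\<forall>a\<in>S. \<forall>b\<in>S. \<forall>c\<in>S. le a b \<and> le b c \<longrightarrow> le a c) \<and>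
     (\<forall>a\<in>S. \<forall>b\<in>S. le a b \<or> le b a)"

definition monomial_order_A ::
  "'a::ring_1 set \<Rightarrow> (nat \<Rightarrow> 'a) \<Rightarrow> nat \<Rightarrow> (expo \<Rightarrow> expo \<Rightarrow> bool) \<Rightarrow> bool" where
  "monomial_order_A R x n le \<longleftrightarrow> total_order_on (exps n) le \<and>
     (\<forall>\<alpha>\<in>exps n. \<forall>\<beta>\<in>exps n. \<forall>\<gamma>\<in>exps n. \<forall>\<mu>\<in>exps n. le \<alpha> \<beta> \<longrightarrow>
        le (lmA R x n le (mono x n \<gamma> * mono x n \<alpha> * mono x n \<mu>))
           (lmA R x n le (mono x n \<gamma> * mono x n \<beta> * mono x n \<mu>))) \<and>
     (\<forall>\<alpha>\<in>exps n. le (\<lambda>_. 0) \<alpha>) \<and>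
     (\<forall>\<alpha>\<in>exps n. \<forall>\<beta>\<in>exps n. tdeg n \<beta> > tdeg n \<alpha> \<longrightarrow> le \<alpha> \<beta> \<and> \<alpha> \<noteq> \<beta>)"

definition vecs :: "nat \<Rightarrow> (nat \<Rightarrow> 'a::ring_1) set" where
  "vecs m = {v. \<forall>i\<ge>m. v i = 0}"

definition submodule :: "nat \<Rightarrow> (nat \<Rightarrow> 'a::ring_1) set \<Rightarrow> bool" where
  "submodule m M \<longleftrightarrow> M \<subseteq> vecs m \<and> (\<lambda>_. 0) \<in> M \<and>
     (\<forall>u\<in>M. \<forall>v\<in>M. (\<lambda>i. u i + v i) \<in> M) \<and>
     (\<forall>a. \<forall>v\<in>M. (\<lambda>i. a * v i) \<in> M)"

text \<open>Monomials of A^m: pairs (alpha, i) standing for x^alpha e_i, i < m.\<close>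
definition mons :: "nat \<Rightarrow> nat \<Rightarrow> (expo \<times> nat) set" where
  "mons n m = exps n \<times> {..<m}"

definition monomial_order_Am ::
  "'a::ring_1 set \<Rightarrow> (nat \<Rightarrow> 'a) \<Rightarrow> nat \<Rightarrow> (expo \<Rightarrow> expo \<Rightarrow> bool) \<Rightarrow> nat
    \<Rightarrow> (expo \<times> nat \<Rightarrow> expo \<times> nat \<Rightarrow> bool) \<Rightarrow> bool" where
  "monomial_order_Am R x n le m lem \<longleftrightarrow> total_order_on (mons n m) lem \<and>
     (\<forall>\<alpha>\<in>exps n. \<forall>\<beta>\<in>exps n. \<forall>i<m.
        lem (\<alpha>, i) (lmA R x n le (mono x n \<beta> * mono x n \<alpha>), i)) \<and>
     (\<forall>\<alpha>\<in>exps n. \<forall>\<beta>\<in>exps n. \<forall>\<gamma>\<in>exps n. \<forall>i<m. \<forall>j<m. lem (\<alpha>, i) (\<beta>, j) \<longrightarrow>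
        lem (lmA R x n le (mono x n \<gamma> * mono x n \<alpha>), i)
            (lmA R x n le (mono x n \<gamma> * mono x n \<beta>), j)) \<and>
     (\<forall>X\<in>mons n m. \<forall>Y\<in>mons n m. tdeg n (fst X) > tdeg n (fst Y) \<longrightarrow> lem Y X \<and> X \<noteq> Y)"

definition suppV :: "'a::ring_1 set \<Rightarrow> (nat \<Rightarrow> 'a) \<Rightarrow> nat \<Rightarrow> nat \<Rightarrow> (nat \<Rightarrow> 'a) \<Rightarrow> (expo \<times> nat) set" where
  "suppV R x n m f = {(\<alpha>, i). i < m \<and> coeffA R x n (f i) \<alpha> \<noteq> 0}"

definition lmV :: "'a::ring_1 set \<Rightarrow> (nat \<Rightarrow> 'a) \<Rightarrow> nat \<Rightarrow> nat
    \<Rightarrow> (expo \<times> nat \<Rightarrow> expo \<times> nat \<Rightarrow> bool) \<Rightarrow> (nat \<Rightarrow> 'a) \<Rightarrow> expo \<times> nat" where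
  "lmV R x n m lem f = (THE X. X \<in> suppV R x n m f \<and> (\<forall>Y\<in>suppV R x n m f. lem Y X))"

definition lcV :: "'a::ring_1 set \<Rightarrow> (nat \<Rightarrow> 'a) \<Rightarrow> nat \<Rightarrow> nat
    \<Rightarrow> (expo \<times> nat \<Rightarrow> expo \<times> nat \<Rightarrow> bool) \<Rightarrow> (nat \<Rightarrow> 'a) \<Rightarrow> 'a" where
  "lcV R x n m lem f = (let X = lmV R x n m lem f in coeffA R x n (f (snd X)) (fst X))"

definition mdivides :: "expo \<times> nat \<Rightarrow> expo \<times> nat \<Rightarrow> bool" where
  "mdivides X Y \<longleftrightarrow> snd X = snd Y \<and> (\<forall>k. fst X k \<le> fst Y k)"

text \<open>One-step reducibility of f w.r.t. the finite set F.  Repetitions among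
  f_1..f_t are absorbed by summing their coefficients (same alpha_i).\<close>
definition reducible :: "'a::ring_1 set \<Rightarrow> (nat \<Rightarrow> 'a) \<Rightarrow> nat \<Rightarrow> nat
    \<Rightarrow> (expo \<times> nat \<Rightarrow> expo \<times> nat \<Rightarrow> bool) \<Rightarrow> (nat \<Rightarrow> 'a) set \<Rightarrow> (nat \<Rightarrow> 'a) \<Rightarrow> bool" where
  "reducible R x n m lem F f \<longleftrightarrow>
    (\<exists>F' r. F' \<subseteq> F \<and> finite F' \<and>
       (\<forall>g\<in>F'. r g \<in> R \<and> mdivides (lmV R x n m lem g) (lmV R x n m lem f)) \<and>
       lcV R x n m lem f =
         (\<Sum>g\<in>F'. (let \<beta> = fst (lmV R x n m lem g);
                       \<alpha> = (\<lambda>k. fst (lmV R x n m lem f) k - \<beta> k)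
                   in r g * sigma_pow R x n \<alpha> (lcV R x n m lem g) * cab R x n \<alpha> \<beta>)))"

definition groebner_basis :: "'a::ring_1 set \<Rightarrow> (nat \<Rightarrow> 'a) \<Rightarrow> nat \<Rightarrow> nat
    \<Rightarrow> (expo \<times> nat \<Rightarrow> expo \<times> nat \<Rightarrow> bool) \<Rightarrow> (nat \<Rightarrow> 'a) set \<Rightarrow> (nat \<Rightarrow> 'a) set \<Rightarrow> bool" where
  "groebner_basis R x n m lem M G \<longleftrightarrow>
    (if M = {\<lambda>_. 0} then G = {\<lambda>_. 0}
     else finite G \<and> G \<noteq> {} \<and> G \<subseteq> M - {\<lambda>_. 0} \<and>
          (\<forall>f\<in>M. f \<noteq> (\<lambda>_. 0) \<longrightarrow> reducible R x n m lem G f))"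

end

theory Submission
  imports Defs "HOL.Topological_Spaces"
begin

text \<open>
  For a monomial x^\<alpha> e_i, the leading coefficients of the elements of M with leading monomial
  x^\<alpha> e_i form a left ideal J(\<alpha>, i) of R.  In a quasi-commutative bijective extension,
  x^\<gamma> x^\<beta> = c x^(\<gamma>+\<beta>) with c a unit and x^\<gamma> r = \<sigma>^\<gamma>(r) x^\<gamma> with \<sigma>^\<gamma> bijective, so the
  pulled-back ideals \<sigma>^(-\<alpha>) J(\<alpha>, i) grow along divisibility of exponents.  Dickson's lemma and
  the Noetherian property make this family finitely generated: finitely many exponents and
  finitely many generators of their ideals suffice.  Picking an element of M realising each
  generator yields a finite set G, and every nonzero f in M is reducible by G, because its
  leading coefficient is an R-combination of the twisted generators below lm f.
\<close>

abbreviation expo_add :: "expo \<Rightarrow> expo \<Rightarrow> expo" where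
  "expo_add \<alpha> \<beta> \<equiv> (\<lambda>k. \<alpha> k + \<beta> k)"

abbreviation expo_diff :: "expo \<Rightarrow> expo \<Rightarrow> expo" where
  "expo_diff \<alpha> \<beta> \<equiv> (\<lambda>k. \<alpha> k - \<beta> k)"

abbreviation expo_le :: "expo \<Rightarrow> expo \<Rightarrow> bool" where
  "expo_le \<alpha> \<beta> \<equiv> \<forall>k. \<alpha> k \<le> \<beta> k"

subsection \<open>Dickson's lemma and monotone families of left ideals\<close>

lemma nat_seq_nondecreasing_subseq:
  fixes s :: "nat \<Rightarrow> nat"
  obtains f :: "nat \<Rightarrow> nat" where "strict_mono f" "\<And>i j. i \<le> j \<Longrightarrow> s (f i) \<le> s (f j)"
proof -
  obtain f where f: "strict_mono f" "monoseq (\<lambda>j. s (f j))" using seq_monosub by blast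
  show thesis
  proof (cases "\<forall>i j. i \<le> j \<longrightarrow> s (f i) \<le> s (f j)")
    case True
    then show thesis using that[OF f(1)] by blast
  next
    case False
    then have dec: "\<And>i j. i \<le> j \<Longrightarrow> s (f j) \<le> s (f i)"
      using f(2) unfolding monoseq_def by blast
    obtain j0 where min: "\<And>j. s (f j0) \<le> s (f j)"
      using ex_has_least_nat[of "\<lambda>_. True" 0 "\<lambda>j. s (f j)"] by blast
    have const: "s (f (j + j0)) = s (f j0)" for j
      using dec[of j0 "j + j0"] min[of "j + j0"] by simp
    have "strict_mono (\<lambda>j. f (j + j0))" using f(1) by (simp add: strict_mono_def)
    then show thesis using that const by simp
  qed
qed

lemma dickson_subseq:
  fixes s :: "nat \<Rightarrow> expo"
  assumes "\<And>k. s k \<in> exps n"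
  obtains f :: "nat \<Rightarrow> nat" where "strict_mono f" "\<And>i j k. i \<le> j \<Longrightarrow> s (f i) k \<le> s (f j) k"
proof -
  have "\<exists>f :: nat \<Rightarrow> nat. strict_mono f \<and> (\<forall>i j k. i \<le> j \<longrightarrow> s (f i) k \<le> s (f j) k)"
    using assms
  proof (induction n arbitrary: s)
    case 0
    then have "s k i = 0" for k i by (simp add: exps_def)
    then show ?case by (intro exI[of _ id]) (simp add: strict_mono_def)
  next
    case (Suc n)
    define t where "t k = (\<lambda>i. if i < n then s k i else 0)" for k
    have "t k \<in> exps n" for k by (simp add: t_def exps_def)
    then obtain f :: "nat \<Rightarrow> nat" where f: "strict_mono f" "\<forall>i j k. i \<le> j \<longrightarrow> t (f i) k \<le> t (f j) k"
      using Suc.IH[of t] by blast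
    obtain g :: "nat \<Rightarrow> nat" where g: "strict_mono g" "\<And>i j. i \<le> j \<Longrightarrow> s (f (g i)) n \<le> s (f (g j)) n"
      using nat_seq_nondecreasing_subseq[of "\<lambda>j. s (f j) n"] by blast
    have "s (f (g i)) k \<le> s (f (g j)) k" if "i \<le> j" for i j k
    proof (cases k n rule: linorder_cases)
      case less
      have "g i \<le> g j" using g(1) that by (simp add: strict_mono_less_eq)
      then have "t (f (g i)) k \<le> t (f (g j)) k" using f(2) by blast
      then show ?thesis using less by (simp add: t_def)
    next
      case equal
      then show ?thesis using g(2)[OF that] by simp
    next
      case greater
      then show ?thesis using Suc.prems by (simp add: exps_def)
    qed
    moreover have "strict_mono (\<lambda>j. f (g j))" using f(1) g(1) by (simp add: strict_mono_def)
    ultimately show ?case by blast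
  qed
  then show thesis using that by blast
qed

lemma left_ideal_sum:
  assumes "left_ideal R I" "finite S" "S \<subseteq> I" "\<And>s. s \<in> S \<Longrightarrow> r s \<in> R"
  shows "(\<Sum>s\<in>S. r s * s) \<in> I"
  using assms(2-4)
proof (induction S rule: finite_induct)
  case (insert s S)
  then show ?case using assms(1) by (simp add: left_ideal_def)
qed (use assms(1) in \<open>simp add: left_ideal_def\<close>)

lemma invertible_in_mult:
  assumes "subring R" "invertible_in R u" "invertible_in R v"
  shows "invertible_in R (u * v)"
proof -
  obtain a b where ab: "a \<in> R" "a * u = 1" "u * a = 1" "b \<in> R" "b * v = 1" "v * b = 1"
    using assms(2,3) unfolding invertible_in_def by blast
  have "(b * a) * (u * v) = b * (a * u) * v" "(u * v) * (b * a) = u * (v * b) * a"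
    by (simp_all add: mult.assoc)
  then show ?thesis
    using ab assms(1) unfolding invertible_in_def subring_def by (intro bexI[of _ "b * a"]) auto
qed

lemma left_noetherian_finite_generators:
  assumes "left_noetherian R" "left_ideal R I"
  obtains S where "finite S" "S \<subseteq> I" "I = {\<Sum>s\<in>S. r s * s | r. \<forall>s. r s \<in> R}"
proof -
  have "\<exists>S. finite S \<and> S \<subseteq> I \<and> I = {\<Sum>s\<in>S. r s * s | r. \<forall>s. r s \<in> R}"
    using assms unfolding left_noetherian_def by blast
  then show thesis using that by blast
qed

lemma left_ideal_Union_chain:
  fixes I :: "nat \<Rightarrow> 'a::ring_1 set"
  assumes ideal: "\<And>j. left_ideal R (I j)" and mono: "\<And>i j. i \<le> j \<Longrightarrow> I i \<subseteq> I j"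
  shows "left_ideal R (\<Union>j. I j)"
  unfolding left_ideal_def
proof (intro conjI ballI)
  show "(\<Union>j. I j) \<subseteq> R" "0 \<in> (\<Union>j. I j)"
    using ideal unfolding left_ideal_def by blast+
next
  fix a b assume "a \<in> (\<Union>j. I j)" "b \<in> (\<Union>j. I j)"
  then obtain i j where "a \<in> I i" "b \<in> I j" by blast
  then have "a \<in> I (max i j)" "b \<in> I (max i j)"
    using mono[of i "max i j"] mono[of j "max i j"] by auto
  then show "a + b \<in> (\<Union>j. I j)" using ideal[of "max i j"] unfolding left_ideal_def by blast
next
  fix r a assume "r \<in> R" "a \<in> (\<Union>j. I j)"
  then obtain j where "r \<in> R" "a \<in> I j" by blast
  then show "r * a \<in> (\<Union>j. I j)" using ideal[of j] unfolding left_ideal_def by blast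
qed

lemma left_noetherian_ascending_chain:
  assumes noeth: "left_noetherian R" and ideal: "\<And>j. left_ideal R (I j)"
    and chain: "\<And>j. I j \<subseteq> I (Suc j)"
  obtains j where "I (Suc j) \<subseteq> I j"
proof -
  have mono: "I i \<subseteq> I j" if "i \<le> j" for i j
    using lift_Suc_mono_le[of I i j] chain that by blast
  obtain S where S: "finite S" "S \<subseteq> (\<Union>j. I j)" "(\<Union>j. I j) = {\<Sum>s\<in>S. r s * s | r. \<forall>s. r s \<in> R}"
    using left_ideal_Union_chain[OF ideal mono] by (rule left_noetherian_finite_generators[OF noeth])
  have "\<exists>N. S \<subseteq> I N" using S(1,2)
  proof (induction S rule: finite_induct)
    case (insert s S)
    then obtain N j where "S \<subseteq> I N" "s \<in> I j" by auto
    then have "insert s S \<subseteq> I (max N j)" using mono[of N "max N j"] mono[of j "max N j"] by auto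
    then show ?case by blast
  qed simp
  then obtain N where "S \<subseteq> I N" by blast
  have "(\<Union>j. I j) \<subseteq> I N"
  proof
    fix u assume "u \<in> (\<Union>j. I j)"
    then obtain r where "u = (\<Sum>s\<in>S. r s * s)" "\<forall>s. r s \<in> R" using S(3) by blast
    then show "u \<in> I N" using left_ideal_sum[OF ideal S(1) \<open>S \<subseteq> I N\<close>] by blast
  qed
  then show thesis using that[of N] by blast
qed

definition sum_below :: "(expo \<Rightarrow> 'a::ring_1 set) \<Rightarrow> expo set \<Rightarrow> expo \<Rightarrow> 'a set" where
  "sum_below K F Y = {\<Sum>X\<in>{X\<in>F. expo_le X Y}. a X | a. \<forall>X\<in>F. a X \<in> K X}"

lemma sum_below_mem:
  assumes "finite F" "X \<in> F" "expo_le X Y" "b \<in> K X" "\<forall>Z\<in>F. 0 \<in> K Z"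
  shows "b \<in> sum_below K F Y"
proof -
  define a where "a = (\<lambda>Z. if Z = X then b else 0)"
  have "(\<Sum>Z\<in>{Z\<in>F. expo_le Z Y}. a Z) = b" using assms(1-3) by (simp add: a_def)
  moreover have "\<forall>Z\<in>F. a Z \<in> K Z" using assms(4,5) by (simp add: a_def)
  ultimately show ?thesis unfolding sum_below_def by blast
qed

lemma sequence_choice_avoiding_prefixes:
  assumes "\<And>F. finite F \<Longrightarrow> F \<subseteq> D \<Longrightarrow> \<exists>Y\<in>D. P F Y"
  shows "\<exists>Y :: nat \<Rightarrow> 'b. \<forall>k. Y k \<in> D \<and> P (Y ` {..<k}) (Y k)"
proof -
  define next_elem where "next_elem F = (SOME Y. Y \<in> D \<and> P F Y)" for F
  define B where "B = rec_nat {} (\<lambda>_ F. insert (next_elem F) F)"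
  define Y where "Y k = next_elem (B k)" for k
  have B: "B k = Y ` {..<k}" for k
    by (induction k) (auto simp: B_def Y_def lessThan_Suc)
  have "Y k \<in> D \<and> P (Y ` {..<k}) (Y k)" for k
  proof (induction k rule: less_induct)
    case (less k)
    then have "\<exists>Z. Z \<in> D \<and> P (Y ` {..<k}) Z" using assms[of "Y ` {..<k}"] by auto
    then have "next_elem (Y ` {..<k}) \<in> D \<and> P (Y ` {..<k}) (next_elem (Y ` {..<k}))"
      unfolding next_elem_def by (rule someI_ex)
    moreover have "Y k = next_elem (Y ` {..<k})" by (simp only: Y_def B)
    ultimately show ?case by simp
  qed
  then show ?thesis by blast
qed

text \<open>Otherwise there is a sequence Y_0, Y_1, ... none of whose ideals lies in the sum of
  the preceding ones below it; Dickson's lemma extracts a divisibility chain, along which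
  the ideals must stabilise.\<close>
lemma monotone_left_ideals_finite_basis:
  assumes noeth: "left_noetherian R"
    and ideal: "\<forall>Y\<in>exps n. left_ideal R (K Y)"
    and mono: "\<forall>X\<in>exps n. \<forall>Y\<in>exps n. expo_le X Y \<longrightarrow> K X \<subseteq> K Y"
  obtains F where "finite F" "F \<subseteq> exps n" "\<And>Y. Y \<in> exps n \<Longrightarrow> K Y \<subseteq> sum_below K F Y"
proof -
  have "\<exists>F. finite F \<and> F \<subseteq> exps n \<and> (\<forall>Y\<in>exps n. K Y \<subseteq> sum_below K F Y)"
  proof (rule ccontr)
    assume "\<nexists>F. finite F \<and> F \<subseteq> exps n \<and> (\<forall>Y\<in>exps n. K Y \<subseteq> sum_below K F Y)"
    then have "\<exists>Y\<in>exps n. \<not> K Y \<subseteq> sum_below K F Y" if "finite F" "F \<subseteq> exps n" for F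
      using that by blast
    from sequence_choice_avoiding_prefixes[OF this] obtain Y :: "nat \<Rightarrow> expo"
      where "\<forall>k. Y k \<in> exps n \<and> \<not> K (Y k) \<subseteq> sum_below K (Y ` {..<k}) (Y k)" ..
    then have Y: "Y k \<in> exps n" "\<not> K (Y k) \<subseteq> sum_below K (Y ` {..<k}) (Y k)" for k
      by simp_all
    obtain f :: "nat \<Rightarrow> nat" where f: "strict_mono f" "\<And>i j k. i \<le> j \<Longrightarrow> Y (f i) k \<le> Y (f j) k"
      using dickson_subseq[of Y n] Y(1) by blast
    obtain j where j: "K (Y (f (Suc j))) \<subseteq> K (Y (f j))"
    proof (rule left_noetherian_ascending_chain[OF noeth])
      show "left_ideal R (K (Y (f j)))" for j using ideal Y(1) by blast
      show "K (Y (f j)) \<subseteq> K (Y (f (Suc j)))" for j using mono Y(1) f(2)[of j "Suc j"] by simp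
    qed
    have "K (Y (f j)) \<subseteq> sum_below K (Y ` {..<f (Suc j)}) (Y (f (Suc j)))"
    proof
      fix b assume "b \<in> K (Y (f j))"
      moreover have "Y (f j) \<in> Y ` {..<f (Suc j)}" using f(1) by (simp add: strict_mono_def)
      moreover have "\<forall>Z\<in>Y ` {..<f (Suc j)}. 0 \<in> K Z" using Y(1) ideal by (auto simp: left_ideal_def)
      ultimately show "b \<in> sum_below K (Y ` {..<f (Suc j)}) (Y (f (Suc j)))"
        using f(2)[of j "Suc j"] by (intro sum_below_mem) auto
    qed
    with j Y(2) show False by blast
  qed
  then show thesis using that by blast
qed

lemma sum_below_in_span:
  assumes F: "finite F" and S: "\<forall>X\<in>F. finite (S X) \<and> K X = {\<Sum>s\<in>S X. r s * s | r. \<forall>s. r s \<in> R}"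
    and b: "b \<in> sum_below K F Y"
  defines "P \<equiv> SIGMA X:F. S X - {0}"
  shows "\<exists>r. (\<forall>t\<in>P. r t \<in> R) \<and> b = (\<Sum>(X, s)\<in>{(X, s)\<in>P. expo_le X Y}. r (X, s) * s)"
proof -
  define FY where "FY = {X\<in>F. expo_le X Y}"
  obtain a where a: "b = (\<Sum>X\<in>FY. a X)" "\<forall>X\<in>F. a X \<in> K X"
    using b unfolding sum_below_def FY_def by blast
  have "\<forall>X\<in>F. \<exists>r. (\<forall>s. r s \<in> R) \<and> a X = (\<Sum>s\<in>S X. r s * s)"
    using a(2) S by blast
  from bchoice[OF this] obtain r where r: "\<forall>X\<in>F. (\<forall>s. r X s \<in> R) \<and> a X = (\<Sum>s\<in>S X. r X s * s)"
    by blast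
  have "b = (\<Sum>X\<in>FY. \<Sum>s\<in>S X. r X s * s)"
    unfolding a(1) using r by (intro sum.cong) (auto simp: FY_def)
  also have "\<dots> = (\<Sum>X\<in>FY. \<Sum>s\<in>S X - {0}. r X s * s)"
    using S by (intro sum.cong refl sum.mono_neutral_right) (auto simp: FY_def)
  also have "\<dots> = (\<Sum>(X, s)\<in>{(X, s)\<in>P. expo_le X Y}. r X s * s)"
  proof -
    have "{(X, s)\<in>P. expo_le X Y} = (SIGMA X:FY. S X - {0})"
      unfolding P_def FY_def by auto
    then show ?thesis using F S unfolding FY_def by (simp add: sum.Sigma)
  qed
  moreover have "\<forall>(X, s)\<in>P. r X s \<in> R" using r unfolding P_def by blast
  ultimately show ?thesis by (intro exI[of _ "\<lambda>(X, s). r X s"]) auto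
qed

lemma monotone_left_ideals_finite_generators:
  assumes noeth: "left_noetherian R"
    and ideal: "\<forall>Y\<in>exps n. left_ideal R (K Y)"
    and mono: "\<forall>X\<in>exps n. \<forall>Y\<in>exps n. expo_le X Y \<longrightarrow> K X \<subseteq> K Y"
  obtains P where "finite P" "\<And>X s. (X, s) \<in> P \<Longrightarrow> X \<in> exps n \<and> s \<in> K X \<and> s \<noteq> 0"
    "\<And>Y b. Y \<in> exps n \<Longrightarrow> b \<in> K Y \<Longrightarrow>
       \<exists>r. (\<forall>t\<in>P. r t \<in> R) \<and> b = (\<Sum>(X, s)\<in>{(X, s)\<in>P. expo_le X Y}. r (X, s) * s)"
proof -
  obtain F where F: "finite F" "F \<subseteq> exps n" "\<And>Y. Y \<in> exps n \<Longrightarrow> K Y \<subseteq> sum_below K F Y"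
    using monotone_left_ideals_finite_basis[OF assms] by blast
  have "\<forall>X\<in>F. \<exists>S. finite S \<and> S \<subseteq> K X \<and> K X = {\<Sum>s\<in>S. r s * s | r. \<forall>s. r s \<in> R}"
  proof
    fix X assume "X \<in> F"
    then have "left_ideal R (K X)" using ideal F(2) by blast
    then obtain S where "finite S" "S \<subseteq> K X" "K X = {\<Sum>s\<in>S. r s * s | r. \<forall>s. r s \<in> R}"
      by (rule left_noetherian_finite_generators[OF noeth])
    then show "\<exists>S. finite S \<and> S \<subseteq> K X \<and> K X = {\<Sum>s\<in>S. r s * s | r. \<forall>s. r s \<in> R}"
      by blast
  qed
  from bchoice[OF this] obtain S where S: "\<forall>X\<in>F. finite (S X) \<and> S X \<subseteq> K X \<and>
      K X = {\<Sum>s\<in>S X. r s * s | r. \<forall>s. r s \<in> R}"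
    by blast
  show thesis
  proof
    show "finite (SIGMA X:F. S X - {0})" using F(1) S by auto
    show "X \<in> exps n \<and> s \<in> K X \<and> s \<noteq> 0" if "(X, s) \<in> (SIGMA X:F. S X - {0})" for X s
      using that F(2) S by blast
    show "\<exists>r. (\<forall>t\<in>(SIGMA X:F. S X - {0}). r t \<in> R) \<and>
        b = (\<Sum>(X, s)\<in>{(X, s)\<in>(SIGMA X:F. S X - {0}). expo_le X Y}. r (X, s) * s)"
      if "Y \<in> exps n" "b \<in> K Y" for Y b
    proof (rule sum_below_in_span[OF F(1)])
      show "\<forall>X\<in>F. finite (S X) \<and> K X = {\<Sum>s\<in>S X. r s * s | r. \<forall>s. r s \<in> R}"
        using S by blast
      show "b \<in> sum_below K F Y" using F(3) that by blast
    qed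
  qed
qed

subsection \<open>Exponents and monomials\<close>

lemma expo_add_exps: "\<alpha> \<in> exps n \<Longrightarrow> \<beta> \<in> exps n \<Longrightarrow> expo_add \<alpha> \<beta> \<in> exps n"
  by (simp add: exps_def)

lemma expo_diff_exps: "\<alpha> \<in> exps n \<Longrightarrow> expo_diff \<alpha> \<beta> \<in> exps n"
  by (simp add: exps_def)

lemma expo_add_diff: "expo_le \<beta> \<alpha> \<Longrightarrow> expo_add (expo_diff \<alpha> \<beta>) \<beta> = \<alpha>"
  by (simp add: fun_eq_iff)

lemma zero_exps: "(\<lambda>_. 0) \<in> exps n"
  by (simp add: exps_def)

definition unit_expo :: "nat \<Rightarrow> expo" where
  "unit_expo i = (\<lambda>k. if k = i then 1 else 0)"

lemma unit_expo_exps: "i < n \<Longrightarrow> unit_expo i \<in> exps n"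
  by (simp add: unit_expo_def exps_def)

lemma mono_0 [simp]: "mono x 0 \<alpha> = 1"
  by (simp add: mono_def)

lemma foldr_mono_factor_acc:
  "foldr (\<lambda>i p. x i ^ \<alpha> i * p) xs z = foldr (\<lambda>i p. x i ^ \<alpha> i * p) xs 1 * (z :: 'a::ring_1)"
  by (induction xs) (simp_all add: mult.assoc)

lemma mono_Suc: "mono x (Suc k) \<alpha> = mono x k \<alpha> * x k ^ \<alpha> k"
  unfolding mono_def by (simp add: foldr_mono_factor_acc[where z = "x k ^ \<alpha> k"])

lemma mono_zero: "mono x k (\<lambda>_. 0) = 1"
  by (induction k) (simp_all add: mono_Suc)

lemma mono_unit_expo: "mono x k (unit_expo i) = (if i < k then x i else 1)"
  by (induction k) (auto simp: mono_Suc unit_expo_def less_Suc_eq)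

lemma mono_unit_expo_add:
  "i < j \<Longrightarrow> j < n \<Longrightarrow> mono x n (expo_add (unit_expo i) (unit_expo j)) = x i * x j"
proof -
  have "i < j \<Longrightarrow> mono x k (expo_add (unit_expo i) (unit_expo j))
      = (if j < k then x i * x j else if i < k then x i else 1)" for k
    by (induction k) (auto simp: mono_Suc unit_expo_def less_Suc_eq)
  then show "i < j \<Longrightarrow> j < n \<Longrightarrow> ?thesis" by simp
qed

lemma sigma_pow_0 [simp]: "sigma_pow R x 0 \<alpha> = id"
  by (simp add: sigma_pow_def)

lemma foldr_comp_acc: "foldr (\<lambda>i g. h i \<circ> g) xs z = foldr (\<lambda>i g. h i \<circ> g) xs id \<circ> z"
  by (induction xs) auto

lemma sigma_pow_Suc: "sigma_pow R x (Suc k) \<alpha> = sigma_pow R x k \<alpha> \<circ> (sigmaA R x k ^^ \<alpha> k)"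
  unfolding sigma_pow_def by (simp add: foldr_comp_acc[where z = "sigmaA R x k ^^ \<alpha> k"])

locale qc_bijective_pbw =
  fixes R :: "'a::ring_1 set" and x :: "nat \<Rightarrow> 'a" and n :: nat
  assumes pbw: "sigma_PBW R x n" and quasi_comm: "quasi_commutative R x n"
    and bijective: "bijective_ext R x n"
begin

abbreviation C where "C \<equiv> coeffA R x n"
abbreviation X where "X \<equiv> mono x n"

lemma subring_R: "subring R"
  using pbw by (simp add: sigma_PBW_def)

lemma zero_in_R: "0 \<in> R" and one_in_R: "1 \<in> R"
  using subring_R by (auto simp: subring_def)

lemma add_in_R: "a \<in> R \<Longrightarrow> b \<in> R \<Longrightarrow> a + b \<in> R"
  and diff_in_R: "a \<in> R \<Longrightarrow> b \<in> R \<Longrightarrow> a - b \<in> R"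
  and mult_in_R: "a \<in> R \<Longrightarrow> b \<in> R \<Longrightarrow> a * b \<in> R"
  using subring_R by (auto simp: subring_def)

lemma sum_in_R: "finite S \<Longrightarrow> (\<And>s. s \<in> S \<Longrightarrow> f s \<in> R) \<Longrightarrow> sum f S \<in> R"
  by (induction S rule: finite_induct) (auto intro: add_in_R zero_in_R)

subsection \<open>Coefficients in the PBW basis\<close>

lemma coeffA_repr: "repr R x n a (C a)"
  using pbw unfolding sigma_PBW_def coeffA_def by (metis theI')

lemma coeffA_eqI: "repr R x n a c \<Longrightarrow> C a = c"
  using pbw unfolding sigma_PBW_def coeffA_def by (metis the1_equality)

lemma coeffA_in_R: "C a \<alpha> \<in> R"
  and coeffA_exps: "C a \<alpha> \<noteq> 0 \<Longrightarrow> \<alpha> \<in> exps n"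
  and finite_coeffA_support: "finite {\<alpha>. C a \<alpha> \<noteq> 0}"
  and coeffA_expansion: "a = (\<Sum>\<alpha>\<in>{\<alpha>. C a \<alpha> \<noteq> 0}. C a \<alpha> * X \<alpha>)"
  using coeffA_repr by (simp_all add: repr_def)

lemma coeffA_expansion_superset:
  assumes "finite S" "{\<alpha>. C a \<alpha> \<noteq> 0} \<subseteq> S"
  shows "a = (\<Sum>\<alpha>\<in>S. C a \<alpha> * X \<alpha>)"
proof -
  have "(\<Sum>\<alpha>\<in>S. C a \<alpha> * X \<alpha>) = (\<Sum>\<alpha>\<in>{\<alpha>. C a \<alpha> \<noteq> 0}. C a \<alpha> * X \<alpha>)"
    using assms by (intro sum.mono_neutral_right) auto
  then show ?thesis using coeffA_expansion by simp
qed

lemma coeffA_unique: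
  assumes "finite S" "S \<subseteq> exps n" "\<And>\<alpha>. c \<alpha> \<in> R" "\<And>\<alpha>. \<alpha> \<notin> S \<Longrightarrow> c \<alpha> = 0"
    and "a = (\<Sum>\<alpha>\<in>S. c \<alpha> * X \<alpha>)"
  shows "C a = c"
proof (rule coeffA_eqI)
  have supp: "{\<alpha>. c \<alpha> \<noteq> 0} \<subseteq> S" using assms(4) by blast
  have "(\<Sum>\<alpha>\<in>S. c \<alpha> * X \<alpha>) = (\<Sum>\<alpha>\<in>{\<alpha>. c \<alpha> \<noteq> 0}. c \<alpha> * X \<alpha>)"
    using assms(1) supp by (intro sum.mono_neutral_right) auto
  then show "repr R x n a c"
    unfolding repr_def using assms supp finite_subset by auto
qed

lemma coeffA_add: "C (a + b) = (\<lambda>\<alpha>. C a \<alpha> + C b \<alpha>)"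
proof (rule coeffA_unique)
  let ?S = "{\<alpha>. C a \<alpha> \<noteq> 0} \<union> {\<alpha>. C b \<alpha> \<noteq> 0}"
  show "finite ?S" using finite_coeffA_support by simp
  show "?S \<subseteq> exps n" using coeffA_exps by blast
  show "C a \<alpha> + C b \<alpha> \<in> R" for \<alpha> using coeffA_in_R by (simp add: add_in_R)
  show "\<alpha> \<notin> ?S \<Longrightarrow> C a \<alpha> + C b \<alpha> = 0" for \<alpha> by simp
  have "a = (\<Sum>\<alpha>\<in>?S. C a \<alpha> * X \<alpha>)" "b = (\<Sum>\<alpha>\<in>?S. C b \<alpha> * X \<alpha>)"
    using finite_coeffA_support by (intro coeffA_expansion_superset; auto)+
  then show "a + b = (\<Sum>\<alpha>\<in>?S. (C a \<alpha> + C b \<alpha>) * X \<alpha>)"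
    by (simp add: distrib_right sum.distrib)
qed

lemma coeffA_lmult: "r \<in> R \<Longrightarrow> C (r * a) = (\<lambda>\<alpha>. r * C a \<alpha>)"
proof (rule coeffA_unique)
  let ?S = "{\<alpha>. C a \<alpha> \<noteq> 0}"
  show "finite ?S" using finite_coeffA_support by simp
  show "?S \<subseteq> exps n" using coeffA_exps by blast
  show "r \<in> R \<Longrightarrow> r * C a \<alpha> \<in> R" for \<alpha> using coeffA_in_R by (simp add: mult_in_R)
  show "\<alpha> \<notin> ?S \<Longrightarrow> r * C a \<alpha> = 0" for \<alpha> by simp
  show "r * a = (\<Sum>\<alpha>\<in>?S. r * C a \<alpha> * X \<alpha>)"
    by (subst coeffA_expansion) (simp add: sum_distrib_left mult.assoc)
qed

lemma coeffA_zero: "C 0 = (\<lambda>_. 0)"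
  by (rule coeffA_unique[where S="{}"]) (auto simp: zero_in_R)

lemma coeffA_eq_zero_iff: "C a = (\<lambda>_. 0) \<longleftrightarrow> a = 0"
  using coeffA_expansion[of a] coeffA_zero by auto

lemma coeffA_sum: "finite S \<Longrightarrow> C (\<Sum>s\<in>S. f s) = (\<lambda>\<alpha>. \<Sum>s\<in>S. C (f s) \<alpha>)"
  by (induction S rule: finite_induct) (simp_all add: coeffA_zero coeffA_add)

lemma coeffA_monomial:
  assumes "c \<in> R" "\<alpha> \<in> exps n"
  shows "C (c * X \<alpha>) = (\<lambda>\<beta>. if \<beta> = \<alpha> then c else 0)"
  by (rule coeffA_unique[where S="{\<alpha>}"]) (use assms in \<open>auto simp: zero_in_R\<close>)

lemma monomial_coeff_inj:
  assumes "c \<in> R" "d \<in> R" "\<alpha> \<in> exps n" "c * X \<alpha> = d * X \<alpha>"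
  shows "c = d"
  using coeffA_monomial[OF assms(1,3)] coeffA_monomial[OF assms(2,3)] assms(4) by metis

definition R_endo :: "('a \<Rightarrow> 'a) \<Rightarrow> bool" where
  "R_endo h \<longleftrightarrow> (\<forall>r\<in>R. h r \<in> R) \<and>
     (\<forall>r\<in>R. \<forall>s\<in>R. h (r * s) = h r * h s \<and> h (r + s) = h r + h s) \<and> h 1 = 1"

lemma R_endo_id: "R_endo id"
  by (simp add: R_endo_def)

lemma R_endo_comp: "R_endo f \<Longrightarrow> R_endo g \<Longrightarrow> R_endo (f \<circ> g)"
  by (simp add: R_endo_def)

lemma R_endo_funpow: "R_endo f \<Longrightarrow> R_endo (f ^^ k)"
  by (induction k) (simp_all add: R_endo_id R_endo_comp)

lemma R_endo_in_R: "R_endo h \<Longrightarrow> r \<in> R \<Longrightarrow> h r \<in> R"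
  and R_endo_mult: "R_endo h \<Longrightarrow> r \<in> R \<Longrightarrow> s \<in> R \<Longrightarrow> h (r * s) = h r * h s"
  and R_endo_add: "R_endo h \<Longrightarrow> r \<in> R \<Longrightarrow> s \<in> R \<Longrightarrow> h (r + s) = h r + h s"
  and R_endo_one: "R_endo h \<Longrightarrow> h 1 = 1"
  by (simp_all add: R_endo_def)

lemma R_endo_zero: "R_endo h \<Longrightarrow> h 0 = 0"
  using R_endo_add[of h 0 0] zero_in_R by simp

lemma R_endo_sum:
  assumes h: "R_endo h" and "finite A" "\<And>a. a \<in> A \<Longrightarrow> g a \<in> R"
  shows "h (\<Sum>a\<in>A. g a) = (\<Sum>a\<in>A. h (g a))"
  using assms(2,3)
proof (induction A rule: finite_induct)
  case (insert a A)
  then have "g a \<in> R" "(\<Sum>a\<in>A. g a) \<in> R" using sum_in_R by auto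
  then show ?case using insert R_endo_add[OF h] by simp
qed (simp add: R_endo_zero[OF h])

definition R_unit :: "'a \<Rightarrow> bool" where
  "R_unit u \<longleftrightarrow> u \<in> R \<and> invertible_in R u"

lemma R_unit_one: "R_unit 1"
  using one_in_R by (auto simp: R_unit_def invertible_in_def)

lemma R_unit_mult: "R_unit u \<Longrightarrow> R_unit v \<Longrightarrow> R_unit (u * v)"
  using mult_in_R invertible_in_mult[OF subring_R] by (simp add: R_unit_def)

lemma R_endo_unit: "R_endo h \<Longrightarrow> R_unit u \<Longrightarrow> R_unit (h u)"
  unfolding R_unit_def invertible_in_def
  by (metis R_endo_in_R R_endo_mult R_endo_one)

lemma R_unit_left_inverse:
  assumes "R_unit u"
  obtains v where "v \<in> R" "v * u = 1"
  using assms by (auto simp: R_unit_def invertible_in_def)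

lemma R_unit_cancel_right: "R_unit u \<Longrightarrow> y * u = 0 \<Longrightarrow> y = 0"
  unfolding R_unit_def invertible_in_def by (metis mult.assoc mult_1_right mult_zero_left)

subsection \<open>Commutation rules\<close>

abbreviation \<sigma> where "\<sigma> i \<equiv> sigmaA R x i"
abbreviation \<sigma>pow where "\<sigma>pow \<alpha> \<equiv> sigma_pow R x n \<alpha>"

lemma lmult_var_in_R_imp_zero:
  assumes "i < n" "d \<in> R" "d * x i \<in> R"
  shows "d = 0"
proof -
  have "d * X (unit_expo i) = (d * x i) * X (\<lambda>_. 0)"
    using assms(1) by (simp add: mono_unit_expo mono_zero)
  moreover have "unit_expo i \<noteq> (\<lambda>_. 0)" by (auto simp: unit_expo_def fun_eq_iff)
  ultimately show ?thesis
    using coeffA_monomial[OF assms(2) unit_expo_exps[OF assms(1)]]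
      coeffA_monomial[OF assms(3) zero_exps] by metis
qed

lemma sigmaA_eqI:
  assumes "i < n" "r \<in> R" "c \<in> R" "x i * r = c * x i"
  shows "\<sigma> i r = c"
  unfolding sigmaA_def
proof (rule the1_equality)
  show "\<exists>!c. c \<in> R \<and> x i * r - c * x i \<in> R"
  proof (rule ex1I[of _ c])
    show "c \<in> R \<and> x i * r - c * x i \<in> R" using assms zero_in_R by simp
    fix c' assume "c' \<in> R \<and> x i * r - c' * x i \<in> R"
    then have "(c - c') * x i \<in> R" "c - c' \<in> R" using assms by (simp_all add: algebra_simps diff_in_R)
    then show "c' = c" using lmult_var_in_R_imp_zero assms by fastforce
  qed
qed (use assms zero_in_R in simp)

lemma sigmaA_in_R: "i < n \<Longrightarrow> r \<in> R \<Longrightarrow> \<sigma> i r \<in> R"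
  and var_mult_commute: "i < n \<Longrightarrow> r \<in> R \<Longrightarrow> x i * r = \<sigma> i r * x i"
proof -
  assume i: "i < n" and r: "r \<in> R"
  obtain c where "c \<in> R" "x i * r = c * x i"
  proof (cases "r = 0")
    case False
    then show ?thesis using quasi_comm i r that unfolding quasi_commutative_def by blast
  qed (use zero_in_R that in simp)
  then show "\<sigma> i r \<in> R" "x i * r = \<sigma> i r * x i" using sigmaA_eqI[OF i r] by simp_all
qed

lemma sigmaA_R_endo: "i < n \<Longrightarrow> R_endo (\<sigma> i)"
  unfolding R_endo_def
proof (intro conjI ballI)
  assume i: "i < n"
  show "r \<in> R \<Longrightarrow> \<sigma> i r \<in> R" for r using sigmaA_in_R i by blast
  show "\<sigma> i 1 = 1" using sigmaA_eqI[OF i one_in_R one_in_R] by simp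
  fix r s assume rs: "r \<in> R" "s \<in> R"
  note comm = var_mult_commute[OF i] and inR = sigmaA_in_R[OF i]
  have "x i * (r * s) = \<sigma> i r * \<sigma> i s * x i"
    using comm[OF rs(1)] comm[OF rs(2)] by (metis mult.assoc)
  then show "\<sigma> i (r * s) = \<sigma> i r * \<sigma> i s"
    using rs by (intro sigmaA_eqI[OF i]) (simp_all add: mult_in_R inR)
  have "x i * (r + s) = (\<sigma> i r + \<sigma> i s) * x i"
    using comm[OF rs(1)] comm[OF rs(2)] by (simp add: distrib_left distrib_right)
  then show "\<sigma> i (r + s) = \<sigma> i r + \<sigma> i s"
    using rs by (intro sigmaA_eqI[OF i]) (simp_all add: add_in_R inR)
qed

lemma sigma_pow_R_endo_upto: "k \<le> n \<Longrightarrow> R_endo (sigma_pow R x k \<alpha>)"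
  by (induction k) (simp_all add: sigma_pow_Suc R_endo_id R_endo_comp R_endo_funpow sigmaA_R_endo)

lemma sigma_pow_bij_upto: "k \<le> n \<Longrightarrow> bij_betw (sigma_pow R x k \<alpha>) R R"
proof (induction k)
  case (Suc k)
  have "bij_betw (\<sigma> k) R R" using bijective Suc.prems by (simp add: bijective_ext_def)
  then show ?case using Suc unfolding sigma_pow_Suc
    by (intro bij_betw_trans[of _ R R] bij_betw_funpow) simp_all
qed (use bij_betw_id[of R] in \<open>simp add: id_def\<close>)

lemma var_power_mult_commute: "i < n \<Longrightarrow> r \<in> R \<Longrightarrow> x i ^ a * r = (\<sigma> i ^^ a) r * x i ^ a"
proof (induction a)
  case (Suc a)
  have "(\<sigma> i ^^ a) r \<in> R" using R_endo_in_R[OF R_endo_funpow[OF sigmaA_R_endo]] Suc.prems by blast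
  then have "x i * ((\<sigma> i ^^ a) r * x i ^ a) = (\<sigma> i ^^ Suc a) r * x i ^ Suc a"
    using var_mult_commute[OF Suc.prems(1)] by (simp add: mult.assoc[symmetric])
  then show ?case using Suc by (simp add: mult.assoc)
qed simp

lemma mono_mult_commute_upto:
  "k \<le> n \<Longrightarrow> r \<in> R \<Longrightarrow> mono x k \<alpha> * r = sigma_pow R x k \<alpha> r * mono x k \<alpha>"
proof (induction k arbitrary: r)
  case (Suc k)
  have r': "(\<sigma> k ^^ \<alpha> k) r \<in> R" using R_endo_in_R[OF R_endo_funpow[OF sigmaA_R_endo]] Suc by simp
  have "mono x (Suc k) \<alpha> * r = mono x k \<alpha> * ((\<sigma> k ^^ \<alpha> k) r * x k ^ \<alpha> k)"
    using var_power_mult_commute Suc.prems by (simp add: mono_Suc mult.assoc)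
  also have "\<dots> = sigma_pow R x (Suc k) \<alpha> r * mono x (Suc k) \<alpha>"
    using Suc.IH[OF _ r'] Suc.prems by (simp add: sigma_pow_Suc mono_Suc mult.assoc[symmetric])
  finally show ?case .
qed simp

lemma \<sigma>pow_R_endo: "R_endo (\<sigma>pow \<alpha>)"
  using sigma_pow_R_endo_upto by simp

lemma \<sigma>pow_in_R: "r \<in> R \<Longrightarrow> \<sigma>pow \<alpha> r \<in> R"
  using R_endo_in_R[OF \<sigma>pow_R_endo] .

lemma \<sigma>pow_zero: "\<sigma>pow \<alpha> 0 = 0"
  using R_endo_zero[OF \<sigma>pow_R_endo] .

lemma \<sigma>pow_bij: "bij_betw (\<sigma>pow \<alpha>) R R"
  using sigma_pow_bij_upto by simp

lemma \<sigma>pow_inj: "r \<in> R \<Longrightarrow> s \<in> R \<Longrightarrow> \<sigma>pow \<alpha> r = \<sigma>pow \<alpha> s \<Longrightarrow> r = s"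
  using \<sigma>pow_bij unfolding bij_betw_def inj_on_def by blast

lemma \<sigma>pow_nonzero: "r \<in> R \<Longrightarrow> r \<noteq> 0 \<Longrightarrow> \<sigma>pow \<alpha> r \<noteq> 0"
  using \<sigma>pow_inj[OF _ zero_in_R] \<sigma>pow_zero by metis

lemma mono_mult_commute: "r \<in> R \<Longrightarrow> X \<alpha> * r = \<sigma>pow \<alpha> r * X \<alpha>"
  using mono_mult_commute_upto by simp

lemma lin1_coeffA_support:
  assumes "a \<in> lin1 R x n" "C a \<alpha> \<noteq> 0"
  shows "\<alpha> = (\<lambda>_. 0) \<or> (\<exists>k<n. \<alpha> = unit_expo k)"
proof -
  obtain r0 r where a: "a = r0 + (\<Sum>k<n. r k * x k)" "r0 \<in> R" "\<forall>k. r k \<in> R"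
    using assms(1) unfolding lin1_def by blast
  have expansion: "a = r0 * X (\<lambda>_. 0) + (\<Sum>k<n. r k * X (unit_expo k))"
    unfolding a(1) by (simp add: mono_zero mono_unit_expo)
  show ?thesis
  proof (rule ccontr)
    assume ne: "\<not> ?thesis"
    have "C (r0 * X (\<lambda>_. 0)) \<alpha> = 0"
      using ne coeffA_monomial[OF a(2) zero_exps] by simp
    moreover have "C (r k * X (unit_expo k)) \<alpha> = 0" if "k < n" for k
      using ne that coeffA_monomial[OF _ unit_expo_exps[OF that]] a(3) by auto
    ultimately have "C a \<alpha> = 0"
      by (subst expansion) (simp add: coeffA_add coeffA_sum)
    with assms(2) show False by simp
  qed
qed

lemma cvar_unit_commute:
  assumes "i < j" "j < n"
  shows "R_unit (cvar R x n i j) \<and> x j * x i = cvar R x n i j * x i * x j"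
proof -
  obtain c where c: "c \<in> R - {0}" "x j * x i = c * x i * x j"
    using quasi_comm assms unfolding quasi_commutative_def by (meson less_trans)
  let ?P = "\<lambda>c. c \<in> R - {0} \<and> x j * x i - c * x i * x j \<in> lin1 R x n"
  have "?P c"
    using c zero_in_R unfolding lin1_def by (auto intro!: exI[of _ 0] exI[of _ "\<lambda>_. 0"])
  moreover have "c' = c" if "?P c'" for c'
  proof -
    let ?\<alpha> = "expo_add (unit_expo i) (unit_expo j)"
    have "x j * x i - c' * x i * x j = (c - c') * X ?\<alpha>"
      using c(2) assms by (simp add: mono_unit_expo_add algebra_simps)
    moreover have "?\<alpha> \<noteq> (\<lambda>_. 0)" "\<forall>k. ?\<alpha> \<noteq> unit_expo k"
      using assms(1) by (auto simp: unit_expo_def fun_eq_iff split: if_splits)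
    ultimately have "C ((c - c') * X ?\<alpha>) ?\<alpha> = 0" using lin1_coeffA_support that by metis
    moreover have "c - c' \<in> R" using c that diff_in_R by blast
    ultimately show "c' = c"
      using coeffA_monomial expo_add_exps unit_expo_exps assms by fastforce
  qed
  ultimately have "cvar R x n i j = c" unfolding cvar_def by (rule the_equality)
  moreover have "invertible_in R (cvar R x n i j)"
    using bijective assms unfolding bijective_ext_def by blast
  ultimately show ?thesis using c by (simp add: R_unit_def)
qed

lemma var_mult_var_power:
  assumes "j < k" "k < n"
  shows "\<exists>v. R_unit v \<and> x k * x j ^ b = v * x j ^ b * x k"
proof (induction b)
  case 0
  show ?case using R_unit_one by (intro exI[of _ 1]) simp
next
  case (Suc b)
  then obtain v where v: "R_unit v" "x k * x j ^ b = v * x j ^ b * x k" by blast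
  let ?c = "cvar R x n j k"
  have c: "R_unit ?c" "x k * x j = ?c * x j * x k" using cvar_unit_commute[OF assms] by simp_all
  have j: "j < n" using assms by simp
  have "x k * x j ^ Suc b = (x k * x j ^ b) * x j" by (simp only: power_Suc2 mult.assoc)
  also have "\<dots> = v * x j ^ b * (x k * x j)" using v(2) by (simp add: mult.assoc)
  also have "\<dots> = v * (x j ^ b * ?c) * x j * x k" using c(2) by (simp add: mult.assoc)
  also have "\<dots> = v * (\<sigma> j ^^ b) ?c * x j ^ Suc b * x k"
    using var_power_mult_commute[OF j, of ?c b] c(1)
    by (simp add: R_unit_def mult.assoc power_Suc2 del: power_Suc)
  finally show ?case
    using R_unit_mult[OF v(1) R_endo_unit[OF R_endo_funpow[OF sigmaA_R_endo[OF j]] c(1)]] by blast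
qed

lemma var_mult_mono_upto:
  assumes "k < n" "k' \<le> k"
  shows "\<exists>w. R_unit w \<and> x k * mono x k' \<beta> = w * mono x k' \<beta> * x k"
  using assms(2)
proof (induction k')
  case 0
  show ?case using R_unit_one by (intro exI[of _ 1]) simp
next
  case (Suc k')
  then obtain w where w: "R_unit w" "x k * mono x k' \<beta> = w * mono x k' \<beta> * x k" by auto
  obtain v where v: "R_unit v" "x k * x k' ^ \<beta> k' = v * x k' ^ \<beta> k' * x k"
    using var_mult_var_power[of k' k] Suc.prems assms(1) by auto
  have k': "k' \<le> n" using Suc.prems assms(1) by simp
  have "x k * mono x (Suc k') \<beta> = (x k * mono x k' \<beta>) * x k' ^ \<beta> k'"
    by (simp add: mono_Suc mult.assoc)
  also have "\<dots> = w * mono x k' \<beta> * (x k * x k' ^ \<beta> k')" using w(2) by (simp add: mult.assoc)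
  also have "\<dots> = w * (mono x k' \<beta> * v) * x k' ^ \<beta> k' * x k" using v(2) by (simp add: mult.assoc)
  also have "\<dots> = w * sigma_pow R x k' \<beta> v * mono x (Suc k') \<beta> * x k"
    using mono_mult_commute_upto[OF k', of v \<beta>] v(1) by (simp add: R_unit_def mult.assoc mono_Suc)
  finally show ?case
    using R_unit_mult[OF w(1) R_endo_unit[OF sigma_pow_R_endo_upto[OF k'] v(1)]] by blast
qed

lemma var_power_mult_mono_upto:
  assumes "k < n"
  shows "\<exists>w. R_unit w \<and> x k ^ a * mono x k \<beta> = w * mono x k \<beta> * x k ^ a"
proof (induction a)
  case 0
  show ?case using R_unit_one by (intro exI[of _ 1]) simp
next
  case (Suc a)
  then obtain w where w: "R_unit w" "x k ^ a * mono x k \<beta> = w * mono x k \<beta> * x k ^ a" by blast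
  obtain w1 where w1: "R_unit w1" "x k * mono x k \<beta> = w1 * mono x k \<beta> * x k"
    using var_mult_mono_upto[OF assms, of k] by auto
  have "x k ^ Suc a * mono x k \<beta> = (x k * w) * mono x k \<beta> * x k ^ a"
    using w(2) by (simp add: mult.assoc)
  also have "\<dots> = \<sigma> k w * w1 * mono x k \<beta> * x k ^ Suc a"
    using var_mult_commute[OF assms, of w] w(1) w1(2) by (simp add: R_unit_def mult.assoc)
  finally show ?case using R_unit_mult[OF R_endo_unit[OF sigmaA_R_endo[OF assms] w(1)] w1(1)] by blast
qed

text \<open>Quasi-commutativity with invertible c_{i,j} makes x^\<gamma> x^\<beta> a unit multiple of
  x^(\<gamma>+\<beta>): each x_k passed to the right picks up only units.\<close>
lemma mono_mult_mono_unit_upto: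
  assumes "k \<le> n"
  shows "\<exists>u. R_unit u \<and> mono x k \<gamma> * mono x k \<beta> = u * mono x k (expo_add \<gamma> \<beta>)"
  using assms
proof (induction k)
  case 0
  show ?case using R_unit_one by (intro exI[of _ 1]) simp
next
  case (Suc k)
  then have k: "k < n" "k \<le> n" by simp_all
  obtain u where u: "R_unit u" "mono x k \<gamma> * mono x k \<beta> = u * mono x k (expo_add \<gamma> \<beta>)"
    using Suc k by blast
  obtain w where w: "R_unit w" "x k ^ \<gamma> k * mono x k \<beta> = w * mono x k \<beta> * x k ^ \<gamma> k"
    using var_power_mult_mono_upto[OF k(1)] by blast
  have "mono x (Suc k) \<gamma> * mono x (Suc k) \<beta>
      = mono x k \<gamma> * (x k ^ \<gamma> k * mono x k \<beta>) * x k ^ \<beta> k"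
    by (simp add: mono_Suc mult.assoc)
  also have "\<dots> = (mono x k \<gamma> * w) * mono x k \<beta> * (x k ^ \<gamma> k * x k ^ \<beta> k)"
    using w(2) by (simp add: mult.assoc)
  also have "\<dots> = sigma_pow R x k \<gamma> w * u * mono x (Suc k) (expo_add \<gamma> \<beta>)"
    using mono_mult_commute_upto[OF k(2), of w \<gamma>] w(1) u(2)
    by (simp add: R_unit_def mult.assoc power_add mono_Suc)
  finally show ?case
    using R_unit_mult[OF R_endo_unit[OF sigma_pow_R_endo_upto[OF k(2)] w(1)] u(1)] by blast
qed

lemma cab_eqI:
  assumes "u \<in> R" "\<gamma> \<in> exps n" "\<beta> \<in> exps n" "X \<gamma> * X \<beta> = u * X (expo_add \<gamma> \<beta>)"
  shows "cab R x n \<gamma> \<beta> = u"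
  unfolding cab_def
proof (rule the_equality)
  let ?\<delta> = "expo_add \<gamma> \<beta>"
  have \<delta>: "?\<delta> \<in> exps n" using expo_add_exps assms(2,3) .
  show "u \<in> R \<and> (let p = X \<gamma> * X \<beta> - u * X ?\<delta> in p = 0 \<or> degA R x n p < tdeg n ?\<delta>)"
    using assms(1,4) by simp
  fix c assume c: "c \<in> R \<and> (let p = X \<gamma> * X \<beta> - c * X ?\<delta> in p = 0 \<or> degA R x n p < tdeg n ?\<delta>)"
  show "c = u"
  proof (rule ccontr)
    assume ne: "c \<noteq> u"
    have d: "u - c \<in> R" using c assms(1) diff_in_R by blast
    have p: "X \<gamma> * X \<beta> - c * X ?\<delta> = (u - c) * X ?\<delta>" using assms(4) by (simp add: algebra_simps)
    have supp: "suppA R x n ((u - c) * X ?\<delta>) = {?\<delta>}"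
      unfolding suppA_def coeffA_monomial[OF d \<delta>] using ne by auto
    then have "(u - c) * X ?\<delta> \<noteq> 0" using coeffA_zero by (auto simp: suppA_def)
    moreover have "degA R x n ((u - c) * X ?\<delta>) = tdeg n ?\<delta>" using supp by (simp add: degA_def)
    ultimately show False using c p by (simp add: Let_def)
  qed
qed

lemma cab_unit: "\<gamma> \<in> exps n \<Longrightarrow> \<beta> \<in> exps n \<Longrightarrow> R_unit (cab R x n \<gamma> \<beta>)"
  and mono_mult_mono: "\<gamma> \<in> exps n \<Longrightarrow> \<beta> \<in> exps n \<Longrightarrow> X \<gamma> * X \<beta> = cab R x n \<gamma> \<beta> * X (expo_add \<gamma> \<beta>)"
  using mono_mult_mono_unit_upto[of n \<gamma> \<beta>] cab_eqI by (auto simp: R_unit_def)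

lemma cab_in_R: "\<gamma> \<in> exps n \<Longrightarrow> \<beta> \<in> exps n \<Longrightarrow> cab R x n \<gamma> \<beta> \<in> R"
  using cab_unit by (simp add: R_unit_def)

lemma mono_mult_monomial:
  assumes "\<gamma> \<in> exps n" "\<beta> \<in> exps n" "r \<in> R"
  shows "X \<gamma> * (r * X \<beta>) = \<sigma>pow \<gamma> r * cab R x n \<gamma> \<beta> * X (expo_add \<gamma> \<beta>)"
proof -
  have "X \<gamma> * (r * X \<beta>) = \<sigma>pow \<gamma> r * (X \<gamma> * X \<beta>)"
    using mono_mult_commute[OF assms(3)] by (simp add: mult.assoc[symmetric])
  then show ?thesis using mono_mult_mono[OF assms(1,2)] by (simp add: mult.assoc)
qed

text \<open>Associativity of x^\<gamma> x^\<beta> b, read off in the PBW basis.\<close>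
lemma sigma_pow_cab_commute:
  assumes "\<gamma> \<in> exps n" "\<beta> \<in> exps n" "b \<in> R"
  shows "\<sigma>pow \<gamma> (\<sigma>pow \<beta> b) * cab R x n \<gamma> \<beta> = cab R x n \<gamma> \<beta> * \<sigma>pow (expo_add \<gamma> \<beta>) b"
proof -
  let ?c = "cab R x n \<gamma> \<beta>" and ?\<delta> = "expo_add \<gamma> \<beta>"
  have "X \<gamma> * (X \<beta> * b) = \<sigma>pow \<gamma> (\<sigma>pow \<beta> b) * ?c * X ?\<delta>"
    using mono_mult_commute[OF assms(3)] mono_mult_monomial[OF assms(1,2) \<sigma>pow_in_R[OF assms(3)]]
    by simp
  moreover have "(X \<gamma> * X \<beta>) * b = ?c * \<sigma>pow ?\<delta> b * X ?\<delta>"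
    using mono_mult_mono[OF assms(1,2)] mono_mult_commute[OF assms(3), of ?\<delta>] by (simp add: mult.assoc)
  ultimately have "\<sigma>pow \<gamma> (\<sigma>pow \<beta> b) * ?c * X ?\<delta> = ?c * \<sigma>pow ?\<delta> b * X ?\<delta>"
    by (simp add: mult.assoc)
  moreover have "\<sigma>pow \<gamma> (\<sigma>pow \<beta> b) * ?c \<in> R" "?c * \<sigma>pow ?\<delta> b \<in> R"
    using assms by (simp_all add: mult_in_R \<sigma>pow_in_R cab_in_R)
  ultimately show ?thesis using monomial_coeff_inj expo_add_exps[OF assms(1,2)] by blast
qed

lemma sigma_pow_factor_through_divisor:
  assumes "\<alpha> \<in> exps n" "\<beta> \<in> exps n" "expo_le \<beta> \<alpha>" "s \<in> R"
    and "v * cab R x n (expo_diff \<alpha> \<beta>) \<beta> = 1"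
  shows "v * \<sigma>pow (expo_diff \<alpha> \<beta>) (\<sigma>pow \<beta> s) * cab R x n (expo_diff \<alpha> \<beta>) \<beta> = \<sigma>pow \<alpha> s"
proof -
  let ?c = "cab R x n (expo_diff \<alpha> \<beta>) \<beta>"
  have "\<sigma>pow (expo_diff \<alpha> \<beta>) (\<sigma>pow \<beta> s) * ?c = ?c * \<sigma>pow \<alpha> s"
    using sigma_pow_cab_commute[OF expo_diff_exps[OF assms(1)] assms(2,4)] assms(3)
    by (simp add: expo_add_diff)
  then have "v * \<sigma>pow (expo_diff \<alpha> \<beta>) (\<sigma>pow \<beta> s) * ?c = (v * ?c) * \<sigma>pow \<alpha> s"
    by (simp add: mult.assoc)
  then show ?thesis using assms(5) by simp
qed

lemma coeffA_mono_mult: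
  assumes \<gamma>: "\<gamma> \<in> exps n"
  shows "C (X \<gamma> * a) = (\<lambda>\<delta>. if expo_le \<gamma> \<delta> \<and> C a (expo_diff \<delta> \<gamma>) \<noteq> 0
      then \<sigma>pow \<gamma> (C a (expo_diff \<delta> \<gamma>)) * cab R x n \<gamma> (expo_diff \<delta> \<gamma>) else 0)"
    (is "_ = ?c")
proof (rule coeffA_unique[where S = "expo_add \<gamma> ` {\<beta>. C a \<beta> \<noteq> 0}"])
  let ?Z = "{\<beta>. C a \<beta> \<noteq> 0}"
  show "finite (expo_add \<gamma> ` ?Z)" using finite_coeffA_support by simp
  show "expo_add \<gamma> ` ?Z \<subseteq> exps n" using coeffA_exps expo_add_exps[OF \<gamma>] by blast
  show "?c \<delta> \<in> R" for \<delta>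
    using coeffA_exps \<gamma> by (auto intro!: mult_in_R \<sigma>pow_in_R coeffA_in_R cab_in_R zero_in_R)
  show "?c \<delta> = 0" if "\<delta> \<notin> expo_add \<gamma> ` ?Z" for \<delta>
  proof (rule ccontr)
    assume "?c \<delta> \<noteq> 0"
    then have "expo_le \<gamma> \<delta>" "C a (expo_diff \<delta> \<gamma>) \<noteq> 0" by (auto split: if_splits)
    then have "\<delta> \<in> expo_add \<gamma> ` ?Z" by (intro rev_image_eqI[of "expo_diff \<delta> \<gamma>"]) auto
    with that show False ..
  qed
  have inj: "inj_on (expo_add \<gamma>) ?Z" by (simp add: inj_on_def fun_eq_iff)
  have "X \<gamma> * a = (\<Sum>\<beta>\<in>?Z. X \<gamma> * (C a \<beta> * X \<beta>))"
    by (subst coeffA_expansion) (simp add: sum_distrib_left)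
  also have "\<dots> = (\<Sum>\<beta>\<in>?Z. ?c (expo_add \<gamma> \<beta>) * X (expo_add \<gamma> \<beta>))"
    using coeffA_exps mono_mult_monomial[OF \<gamma> _ coeffA_in_R] by (intro sum.cong) auto
  also have "\<dots> = (\<Sum>\<delta>\<in>expo_add \<gamma> ` ?Z. ?c \<delta> * X \<delta>)"
    by (simp only: sum.reindex[OF inj] o_def)
  finally show "X \<gamma> * a = (\<Sum>\<delta>\<in>expo_add \<gamma> ` ?Z. ?c \<delta> * X \<delta>)" .
qed

lemma coeffA_mono_mult_at:
  "\<gamma> \<in> exps n \<Longrightarrow> C (X \<gamma> * a) (expo_add \<gamma> \<beta>) = \<sigma>pow \<gamma> (C a \<beta>) * cab R x n \<gamma> \<beta>"
  using coeffA_mono_mult \<sigma>pow_zero by simp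

lemma coeffA_mono_mult_nonzero_iff:
  assumes "\<gamma> \<in> exps n" "\<beta> \<in> exps n"
  shows "C (X \<gamma> * a) (expo_add \<gamma> \<beta>) \<noteq> 0 \<longleftrightarrow> C a \<beta> \<noteq> 0"
  using coeffA_mono_mult_at[OF assms(1)] R_unit_cancel_right[OF cab_unit[OF assms]]
    \<sigma>pow_nonzero[OF coeffA_in_R] \<sigma>pow_zero
  by (metis mult_zero_left)

lemma coeffA_mono_mult_support:
  assumes "\<gamma> \<in> exps n" "C (X \<gamma> * a) \<delta> \<noteq> 0"
  obtains \<beta> where "\<delta> = expo_add \<gamma> \<beta>" "C a \<beta> \<noteq> 0"
proof -
  have le: "expo_le \<gamma> \<delta>" and nz: "C a (expo_diff \<delta> \<gamma>) \<noteq> 0"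
    using assms coeffA_mono_mult[OF assms(1)] by (auto split: if_splits)
  have "\<delta> = expo_add \<gamma> (expo_diff \<delta> \<gamma>)" using le by (simp add: fun_eq_iff)
  then show thesis using nz by (rule that)
qed

end

subsection \<open>Leading terms of vectors\<close>

lemma total_order_on_refl: "total_order_on D le \<Longrightarrow> a \<in> D \<Longrightarrow> le a a"
  and total_order_on_antisym: "total_order_on D le \<Longrightarrow> a \<in> D \<Longrightarrow> b \<in> D \<Longrightarrow> le a b \<Longrightarrow> le b a \<Longrightarrow> a = b"
  and total_order_on_trans:
    "total_order_on D le \<Longrightarrow> a \<in> D \<Longrightarrow> b \<in> D \<Longrightarrow> c \<in> D \<Longrightarrow> le a b \<Longrightarrow> le b c \<Longrightarrow> le a c"
  and total_order_on_total: "total_order_on D le \<Longrightarrow> a \<in> D \<Longrightarrow> b \<in> D \<Longrightarrow> le a b \<or> le b a"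
  unfolding total_order_on_def by blast+

lemma total_order_on_finite_max:
  assumes le: "total_order_on D le" and "finite S" "S \<noteq> {}" "S \<subseteq> D"
  obtains M where "M \<in> S" "\<forall>Y\<in>S. le Y M"
proof -
  have "\<exists>M\<in>S. \<forall>Y\<in>S. le Y M"
    using assms(2-4)
  proof (induction S rule: finite_ne_induct)
    case (singleton a)
    then show ?case using total_order_on_refl[OF le] by simp
  next
    case (insert a F)
    then obtain M where M: "M \<in> F" "\<forall>Y\<in>F. le Y M" by blast
    have D: "a \<in> D" "M \<in> D" "F \<subseteq> D" using insert M by auto
    show ?case
    proof (cases "le a M")
      case True
      then show ?thesis using M by blast
    next
      case False
      then have "le M a" using total_order_on_total[OF le D(1,2)] by blast
      then have "\<forall>Y\<in>F. le Y a" using M D total_order_on_trans[OF le] by blast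
      then show ?thesis using total_order_on_refl[OF le D(1)] by blast
    qed
  qed
  then show thesis using that by blast
qed

lemma reducibleI_indexed:
  assumes "finite T" "inj_on w T" "w ` T \<subseteq> G"
    and "\<forall>t\<in>T. c t \<in> R \<and> mdivides (lmV R x n m lem (w t)) (lmV R x n m lem f)"
    and "lcV R x n m lem f = (\<Sum>t\<in>T. (let \<beta> = fst (lmV R x n m lem (w t));
                       \<alpha> = (\<lambda>k. fst (lmV R x n m lem f) k - \<beta> k)
                   in c t * sigma_pow R x n \<alpha> (lcV R x n m lem (w t)) * cab R x n \<alpha> \<beta>))"
  shows "reducible R x n m lem G f"
  unfolding reducible_def
proof (intro exI[of _ "w ` T"] exI[of _ "\<lambda>g. c (inv_into T w g)"] conjI ballI)
  show "w ` T \<subseteq> G" "finite (w ` T)" using assms(1,3) by simp_all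
next
  fix g assume "g \<in> w ` T"
  then obtain t where "t \<in> T" "g = w t" by blast
  then show "c (inv_into T w g) \<in> R" "mdivides (lmV R x n m lem g) (lmV R x n m lem f)"
    using assms(2,4) by simp_all
next
  show "lcV R x n m lem f = (\<Sum>g\<in>w ` T. (let \<beta> = fst (lmV R x n m lem g);
                       \<alpha> = (\<lambda>k. fst (lmV R x n m lem f) k - \<beta> k)
                   in c (inv_into T w g) * sigma_pow R x n \<alpha> (lcV R x n m lem g) * cab R x n \<alpha> \<beta>))"
    unfolding assms(5) sum.reindex[OF assms(2)] using assms(2) by (intro sum.cong) simp_all
qed

locale qc_bijective_pbw_ordered = qc_bijective_pbw R x n for R :: "'a::ring_1 set" and x n +
  fixes m :: nat and le :: "expo \<Rightarrow> expo \<Rightarrow> bool"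
    and lem :: "expo \<times> nat \<Rightarrow> expo \<times> nat \<Rightarrow> bool"
  assumes order_A: "monomial_order_A R x n le" and order_Am: "monomial_order_Am R x n le m lem"
    and nontrivial: "(1::'a) \<noteq> 0"
begin

abbreviation supp where "supp \<equiv> suppV R x n m"
abbreviation lm where "lm \<equiv> lmV R x n m lem"
abbreviation lc where "lc \<equiv> lcV R x n m lem"

lemma total_order_lem: "total_order_on (mons n m) lem"
  using order_Am by (simp add: monomial_order_Am_def)

lemma total_order_le: "total_order_on (exps n) le"
  using order_A by (simp add: monomial_order_A_def)

lemma supp_mons: "supp f \<subseteq> mons n m"
  unfolding suppV_def mons_def using coeffA_exps by auto

lemma finite_supp: "finite (supp f)"
proof (rule finite_subset)
  show "supp f \<subseteq> (\<Union>i<m. {\<alpha>. C (f i) \<alpha> \<noteq> 0} \<times> {i})" unfolding suppV_def by auto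
qed (use finite_coeffA_support in auto)

lemma supp_nonempty:
  assumes "f \<in> vecs m" "f \<noteq> (\<lambda>_. 0)"
  shows "supp f \<noteq> {}"
proof -
  obtain i where i: "f i \<noteq> 0" using assms(2) by auto
  have "i < m" using assms(1) i unfolding vecs_def by (cases "i < m") auto
  obtain \<alpha> where "C (f i) \<alpha> \<noteq> 0" using i coeffA_eq_zero_iff by fastforce
  then have "(\<alpha>, i) \<in> supp f" using \<open>i < m\<close> by (simp add: suppV_def)
  then show ?thesis by blast
qed

lemma lmV_eqI:
  assumes "Z \<in> supp f" "\<forall>Y\<in>supp f. lem Y Z"
  shows "lm f = Z"
  unfolding lmV_def
proof (rule the_equality)
  show "Z \<in> supp f \<and> (\<forall>Y\<in>supp f. lem Y Z)" using assms by blast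
  fix W assume "W \<in> supp f \<and> (\<forall>Y\<in>supp f. lem Y W)"
  then show "W = Z"
    using assms supp_mons total_order_on_antisym[OF total_order_lem] by blast
qed

lemma lmV_greatest:
  assumes "f \<in> vecs m" "f \<noteq> (\<lambda>_. 0)"
  shows "lm f \<in> supp f" "\<forall>Y\<in>supp f. lem Y (lm f)"
proof -
  obtain Z where "Z \<in> supp f" "\<forall>Y\<in>supp f. lem Y Z"
    using total_order_on_finite_max[OF total_order_lem finite_supp supp_nonempty[OF assms] supp_mons] .
  then show "lm f \<in> supp f" "\<forall>Y\<in>supp f. lem Y (lm f)" using lmV_eqI by simp_all
qed

lemma lcV_eq: "lc f = C (f (snd (lm f))) (fst (lm f))"
  by (simp add: lcV_def Let_def)

lemma lcV_in_R: "lc f \<in> R"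
  unfolding lcV_eq by (rule coeffA_in_R)

lemma lmV_mons: "f \<in> vecs m \<Longrightarrow> f \<noteq> (\<lambda>_. 0) \<Longrightarrow> lm f \<in> mons n m"
  using lmV_greatest supp_mons by blast

lemma lmA_mono_mult:
  assumes "\<gamma> \<in> exps n" "\<alpha> \<in> exps n"
  shows "lmA R x n le (X \<gamma> * X \<alpha>) = expo_add \<gamma> \<alpha>"
proof -
  have C1: "C (X \<alpha>) = (\<lambda>\<beta>. if \<beta> = \<alpha> then 1 else 0)"
    using coeffA_monomial[OF one_in_R assms(2)] by simp
  have "suppA R x n (X \<gamma> * X \<alpha>) = {expo_add \<gamma> \<alpha>}"
  proof
    show "suppA R x n (X \<gamma> * X \<alpha>) \<subseteq> {expo_add \<gamma> \<alpha>}"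
    proof
      fix \<delta> assume "\<delta> \<in> suppA R x n (X \<gamma> * X \<alpha>)"
      then obtain \<beta> where "\<delta> = expo_add \<gamma> \<beta>" "C (X \<alpha>) \<beta> \<noteq> 0"
        using coeffA_mono_mult_support[OF assms(1)] by (auto simp: suppA_def)
      then show "\<delta> \<in> {expo_add \<gamma> \<alpha>}" using C1 by (simp split: if_splits)
    qed
    show "{expo_add \<gamma> \<alpha>} \<subseteq> suppA R x n (X \<gamma> * X \<alpha>)"
      using coeffA_mono_mult_nonzero_iff[OF assms] C1 nontrivial by (simp add: suppA_def)
  qed
  moreover have "le (expo_add \<gamma> \<alpha>) (expo_add \<gamma> \<alpha>)"
    using total_order_on_refl[OF total_order_le expo_add_exps[OF assms]] .
  ultimately show ?thesis unfolding lmA_def by (intro the_equality) auto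
qed

lemma lem_mono_shift:
  assumes "\<gamma> \<in> exps n" "\<alpha> \<in> exps n" "\<beta> \<in> exps n" "i < m" "j < m" "lem (\<alpha>, i) (\<beta>, j)"
  shows "lem (expo_add \<gamma> \<alpha>, i) (expo_add \<gamma> \<beta>, j)"
proof -
  have "lem (lmA R x n le (X \<gamma> * X \<alpha>), i) (lmA R x n le (X \<gamma> * X \<beta>), j)"
    using order_Am assms unfolding monomial_order_Am_def by blast
  then show ?thesis using lmA_mono_mult assms by simp
qed

definition mono_smult :: "expo \<Rightarrow> (nat \<Rightarrow> 'a) \<Rightarrow> nat \<Rightarrow> 'a" where
  "mono_smult \<gamma> g = (\<lambda>i. X \<gamma> * g i)"

lemma supp_mono_smult:
  assumes "\<gamma> \<in> exps n"
  shows "supp (mono_smult \<gamma> g) = (\<lambda>(\<alpha>, i). (expo_add \<gamma> \<alpha>, i)) ` supp g"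
proof
  show "supp (mono_smult \<gamma> g) \<subseteq> (\<lambda>(\<alpha>, i). (expo_add \<gamma> \<alpha>, i)) ` supp g"
  proof
    fix Z assume "Z \<in> supp (mono_smult \<gamma> g)"
    then obtain \<delta> i where Z: "Z = (\<delta>, i)" "i < m" "C (X \<gamma> * g i) \<delta> \<noteq> 0"
      by (auto simp: suppV_def mono_smult_def)
    then obtain \<beta> where "\<delta> = expo_add \<gamma> \<beta>" "C (g i) \<beta> \<noteq> 0"
      using coeffA_mono_mult_support[OF assms] by blast
    then show "Z \<in> (\<lambda>(\<alpha>, i). (expo_add \<gamma> \<alpha>, i)) ` supp g" using Z by (auto simp: suppV_def)
  qed
  show "(\<lambda>(\<alpha>, i). (expo_add \<gamma> \<alpha>, i)) ` supp g \<subseteq> supp (mono_smult \<gamma> g)"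
    using coeffA_mono_mult_nonzero_iff[OF assms] coeffA_exps
    by (auto simp: suppV_def mono_smult_def)
qed

lemma lm_lc_mono_smult:
  assumes g: "g \<in> vecs m" "g \<noteq> (\<lambda>_. 0)" and \<gamma>: "\<gamma> \<in> exps n" and lm: "lm g = (\<beta>, i)"
  shows "lm (mono_smult \<gamma> g) = (expo_add \<gamma> \<beta>, i)"
    and "lc (mono_smult \<gamma> g) = \<sigma>pow \<gamma> (lc g) * cab R x n \<gamma> \<beta>"
proof -
  have top: "(\<beta>, i) \<in> supp g" "\<forall>Y\<in>supp g. lem Y (\<beta>, i)" using lmV_greatest[OF g] lm by auto
  have \<beta>: "\<beta> \<in> exps n" "i < m" using top(1) supp_mons by (auto simp: mons_def)
  show lm': "lm (mono_smult \<gamma> g) = (expo_add \<gamma> \<beta>, i)"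
  proof (rule lmV_eqI)
    show "(expo_add \<gamma> \<beta>, i) \<in> supp (mono_smult \<gamma> g)" unfolding supp_mono_smult[OF \<gamma>] using top(1) by force
    show "\<forall>Y\<in>supp (mono_smult \<gamma> g). lem Y (expo_add \<gamma> \<beta>, i)"
    proof
      fix Y assume "Y \<in> supp (mono_smult \<gamma> g)"
      then obtain \<alpha> j where Y: "Y = (expo_add \<gamma> \<alpha>, j)" "(\<alpha>, j) \<in> supp g"
        unfolding supp_mono_smult[OF \<gamma>] by auto
      then have "\<alpha> \<in> exps n" "j < m" using supp_mons by (auto simp: mons_def)
      then show "lem Y (expo_add \<gamma> \<beta>, i)"
        using lem_mono_shift[OF \<gamma> _ \<beta>(1) _ \<beta>(2)] top(2) Y by blast
    qed
  qed
  show "lc (mono_smult \<gamma> g) = \<sigma>pow \<gamma> (lc g) * cab R x n \<gamma> \<beta>"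
    unfolding lcV_eq lm' using lm coeffA_mono_mult_at[OF \<gamma>] by (simp add: mono_smult_def lcV_eq)
qed

lemma reducible_by_lc_witnesses:
  assumes P: "finite P" "\<And>X s. (X, s) \<in> P \<Longrightarrow> X \<in> exps n \<and> s \<in> R"
    and w: "\<And>X s. (X, s) \<in> P \<Longrightarrow> w (X, s) \<in> G \<and> lm (w (X, s)) = (X, i) \<and> lc (w (X, s)) = \<sigma>pow X s"
    and f: "f \<in> vecs m" "f \<noteq> (\<lambda>_. 0)" "lm f = (\<alpha>, i)"
    and r: "\<forall>t\<in>P. r t \<in> R" "lc f = \<sigma>pow \<alpha> (\<Sum>(X, s)\<in>{(X, s)\<in>P. expo_le X \<alpha>}. r (X, s) * s)"
  shows "reducible R x n m lem G f"
proof -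
  define T where "T = {(X, s)\<in>P. expo_le X \<alpha>}"
  have \<alpha>: "\<alpha> \<in> exps n" using lmV_mons[OF f(1,2)] f(3) by (simp add: mons_def)
  have T: "finite T" "\<And>X s. (X, s) \<in> T \<Longrightarrow> X \<in> exps n \<and> s \<in> R \<and> expo_le X \<alpha> \<and> r (X, s) \<in> R"
    using P r(1) unfolding T_def by (auto intro: finite_subset[OF _ P(1)])
  have "\<exists>v. v \<in> R \<and> v * cab R x n (expo_diff \<alpha> X) X = 1" if "X \<in> exps n" for X
    using cab_unit[OF expo_diff_exps[OF \<alpha>] that] by (auto elim: R_unit_left_inverse)
  then obtain v where v: "\<And>X. X \<in> exps n \<Longrightarrow> v X \<in> R \<and> v X * cab R x n (expo_diff \<alpha> X) X = 1"
    by metis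
  define c where "c = (\<lambda>(X, s). \<sigma>pow \<alpha> (r (X, s)) * v X)"
  have summand: "\<sigma>pow \<alpha> (r (X, s) * s)
      = c (X, s) * \<sigma>pow (expo_diff \<alpha> X) (lc (w (X, s))) * cab R x n (expo_diff \<alpha> X) X"
    if "(X, s) \<in> T" for X s
  proof -
    note Xs = T(2)[OF that]
    have "\<sigma>pow \<alpha> (r (X, s) * s) = \<sigma>pow \<alpha> (r (X, s)) * \<sigma>pow \<alpha> s"
      using R_endo_mult[OF \<sigma>pow_R_endo] Xs by blast
    also have "\<dots> = c (X, s) * \<sigma>pow (expo_diff \<alpha> X) (\<sigma>pow X s) * cab R x n (expo_diff \<alpha> X) X"
      using sigma_pow_factor_through_divisor[OF \<alpha>, of X s "v X"] Xs v[of X]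
      by (simp add: c_def mult.assoc)
    finally show ?thesis using w that by (simp add: T_def)
  qed
  show ?thesis
  proof (rule reducibleI_indexed[where T = T and w = w and c = c])
    show "finite T" using T(1) .
    show "inj_on w T"
    proof (rule inj_onI)
      fix a b assume "a \<in> T" "b \<in> T" "w a = w b"
      moreover obtain X s Y t where "a = (X, s)" "b = (Y, t)" by fastforce
      ultimately show "a = b"
        using w T(2) \<sigma>pow_inj unfolding T_def by (metis (no_types, lifting) CollectD case_prodD prod.inject)
    qed
    show "w ` T \<subseteq> G" using w unfolding T_def by auto
    show "\<forall>t\<in>T. c t \<in> R \<and> mdivides (lm (w t)) (lm f)"
      using T(2) w v f(3) unfolding T_def c_def
      by (auto simp: mdivides_def intro!: mult_in_R \<sigma>pow_in_R)
    have "lc f = (\<Sum>(X, s)\<in>T. \<sigma>pow \<alpha> (r (X, s) * s))"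
      unfolding r(2) T_def[symmetric] using T
      by (subst R_endo_sum[OF \<sigma>pow_R_endo]) (auto intro: mult_in_R simp: case_prod_unfold)
    also have "\<dots> = (\<Sum>t\<in>T. (let \<beta> = fst (lm (w t)); \<alpha>' = (\<lambda>k. fst (lm f) k - \<beta> k)
                   in c t * sigma_pow R x n \<alpha>' (lc (w t)) * cab R x n \<alpha>' \<beta>))"
      using summand w f(3) unfolding T_def by (intro sum.cong) (auto simp: Let_def)
    finally show "lc f = (\<Sum>t\<in>T. (let \<beta> = fst (lm (w t)); \<alpha>' = (\<lambda>k. fst (lm f) k - \<beta> k)
                   in c t * sigma_pow R x n \<alpha>' (lc (w t)) * cab R x n \<alpha>' \<beta>))" .
  qed
qed

end

subsection \<open>Leading coefficient ideals of a submodule\<close>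

locale qc_bijective_pbw_submodule = qc_bijective_pbw_ordered R x n m le lem
  for R :: "'a::ring_1 set" and x n m le lem +
  fixes M :: "(nat \<Rightarrow> 'a) set"
  assumes submodule: "submodule m M"
begin

lemma submodule_vecs: "f \<in> M \<Longrightarrow> f \<in> vecs m"
  and submodule_add: "f \<in> M \<Longrightarrow> g \<in> M \<Longrightarrow> (\<lambda>i. f i + g i) \<in> M"
  and submodule_smult: "f \<in> M \<Longrightarrow> (\<lambda>i. a * f i) \<in> M"
  using submodule by (auto simp: submodule_def)

lemma lm_lc_add:
  assumes f: "f \<in> vecs m" "f \<noteq> (\<lambda>_. 0)" and g: "g \<in> vecs m" "g \<noteq> (\<lambda>_. 0)"
    and lm: "lm f = Z" "lm g = Z" and nz: "lc f + lc g \<noteq> 0"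
  shows "lm (\<lambda>i. f i + g i) = Z" "lc (\<lambda>i. f i + g i) = lc f + lc g"
proof -
  let ?h = "\<lambda>i. f i + g i"
  have lcZ: "C (?h (snd Z)) (fst Z) = lc f + lc g" using lm by (simp add: lcV_eq coeffA_add)
  show lm': "lm ?h = Z"
  proof (rule lmV_eqI)
    have "snd Z < m" using lmV_mons[OF f] lm by (auto simp: mons_def)
    then show "Z \<in> supp ?h" using lcZ nz by (cases Z) (simp add: suppV_def)
    have "supp ?h \<subseteq> supp f \<union> supp g" unfolding suppV_def by (auto simp: coeffA_add)
    then show "\<forall>Y\<in>supp ?h. lem Y Z" using lmV_greatest(2)[OF f] lmV_greatest(2)[OF g] lm by auto
  qed
  show "lc ?h = lc f + lc g" using lcZ by (simp add: lcV_eq lm')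
qed

lemma lm_lc_lmult:
  assumes f: "f \<in> vecs m" "f \<noteq> (\<lambda>_. 0)" and r: "r \<in> R" and nz: "r * lc f \<noteq> 0"
  shows "lm (\<lambda>i. r * f i) = lm f" "lc (\<lambda>i. r * f i) = r * lc f"
proof -
  let ?h = "\<lambda>i. r * f i"
  have lcZ: "C (?h (snd (lm f))) (fst (lm f)) = r * lc f" by (simp add: lcV_eq coeffA_lmult[OF r])
  show lm': "lm ?h = lm f"
  proof (rule lmV_eqI)
    have "snd (lm f) < m" using lmV_mons[OF f] by (auto simp: mons_def)
    then show "lm f \<in> supp ?h" using lcZ nz by (cases "lm f") (simp add: suppV_def)
    have "supp ?h \<subseteq> supp f" unfolding suppV_def by (auto simp: coeffA_lmult[OF r])
    then show "\<forall>Y\<in>supp ?h. lem Y (lm f)" using lmV_greatest(2)[OF f] by blast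
  qed
  show "lc ?h = r * lc f" using lcZ by (simp add: lcV_eq lm')
qed

definition lc_ideal :: "expo \<times> nat \<Rightarrow> 'a set" where
  "lc_ideal Z = insert 0 {lc f | f. f \<in> M \<and> f \<noteq> (\<lambda>_. 0) \<and> lm f = Z}"

lemma lc_idealI: "f \<in> M \<Longrightarrow> lm f = Z \<Longrightarrow> lc f \<in> lc_ideal Z"
  unfolding lc_ideal_def by (cases "f = (\<lambda>_. 0)") (auto simp: lcV_eq coeffA_zero)

lemma lc_idealE:
  assumes "a \<in> lc_ideal Z" "a \<noteq> 0"
  obtains f where "f \<in> M" "f \<noteq> (\<lambda>_. 0)" "lm f = Z" "lc f = a"
  using assms unfolding lc_ideal_def by blast

lemma left_ideal_lc_ideal: "left_ideal R (lc_ideal Z)"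
  unfolding left_ideal_def
proof (intro conjI ballI)
  show "lc_ideal Z \<subseteq> R" "0 \<in> lc_ideal Z"
    using lcV_in_R zero_in_R by (auto simp: lc_ideal_def)
next
  fix a b assume a: "a \<in> lc_ideal Z" and b: "b \<in> lc_ideal Z"
  show "a + b \<in> lc_ideal Z"
  proof (cases "a = 0 \<or> b = 0 \<or> a + b = 0")
    case True
    then show ?thesis using a b by (auto simp: lc_ideal_def)
  next
    case False
    obtain f where f: "f \<in> M" "f \<noteq> (\<lambda>_. 0)" "lm f = Z" "lc f = a"
      using a False by (auto elim: lc_idealE)
    obtain g where g: "g \<in> M" "g \<noteq> (\<lambda>_. 0)" "lm g = Z" "lc g = b"
      using b False by (auto elim: lc_idealE)
    note sum = lm_lc_add[OF submodule_vecs[OF f(1)] f(2) submodule_vecs[OF g(1)] g(2) f(3) g(3)]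
    show ?thesis
      using lc_idealI[OF submodule_add[OF f(1) g(1)]] sum False f(4) g(4) by simp
  qed
next
  fix r a assume r: "r \<in> R" and a: "a \<in> lc_ideal Z"
  show "r * a \<in> lc_ideal Z"
  proof (cases "r * a = 0")
    case True
    then show ?thesis by (simp add: lc_ideal_def)
  next
    case False
    then obtain f where f: "f \<in> M" "f \<noteq> (\<lambda>_. 0)" "lm f = Z" "lc f = a"
      using a False by (auto elim: lc_idealE)
    note prod = lm_lc_lmult[OF submodule_vecs[OF f(1)] f(2) r]
    have "(\<lambda>i. r * f i) \<in> M" by (rule submodule_smult[OF f(1)])
    then show ?thesis using lc_idealI prod False f(3,4) by metis
  qed
qed

text \<open>Pulling J(\<alpha>, i) back along \<sigma>^\<alpha> makes the family monotone under divisibility: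
  multiplying by x^\<gamma> sends lc to \<sigma>^\<gamma>(lc) c_{\<gamma>,\<alpha>}, and \<sigma>^\<gamma> \<sigma>^\<alpha> is \<sigma>^(\<gamma>+\<alpha>)
  conjugated by the unit c_{\<gamma>,\<alpha>}.\<close>
definition base_lc_ideal :: "nat \<Rightarrow> expo \<Rightarrow> 'a set" where
  "base_lc_ideal i \<alpha> = {b \<in> R. \<sigma>pow \<alpha> b \<in> lc_ideal (\<alpha>, i)}"

lemma left_ideal_base_lc_ideal: "left_ideal R (base_lc_ideal i \<alpha>)"
  using left_ideal_lc_ideal[of "(\<alpha>, i)"]
    R_endo_add[OF \<sigma>pow_R_endo] R_endo_mult[OF \<sigma>pow_R_endo] \<sigma>pow_zero \<sigma>pow_in_R
  unfolding left_ideal_def base_lc_ideal_def by (auto intro: add_in_R mult_in_R zero_in_R)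

lemma base_lc_ideal_mono:
  assumes "\<alpha> \<in> exps n" "\<beta> \<in> exps n" "expo_le \<alpha> \<beta>"
  shows "base_lc_ideal i \<alpha> \<subseteq> base_lc_ideal i \<beta>"
proof
  fix b assume b: "b \<in> base_lc_ideal i \<alpha>"
  then have bR: "b \<in> R" and bJ: "\<sigma>pow \<alpha> b \<in> lc_ideal (\<alpha>, i)" by (auto simp: base_lc_ideal_def)
  show "b \<in> base_lc_ideal i \<beta>"
  proof (cases "b = 0")
    case True
    then show ?thesis using left_ideal_base_lc_ideal unfolding left_ideal_def by blast
  next
    case False
    then obtain g where g: "g \<in> M" "g \<noteq> (\<lambda>_. 0)" "lm g = (\<alpha>, i)" "lc g = \<sigma>pow \<alpha> b"
      using bJ \<sigma>pow_nonzero[OF bR] by (auto elim: lc_idealE)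
    let ?\<gamma> = "expo_diff \<beta> \<alpha>" and ?c = "cab R x n (expo_diff \<beta> \<alpha>) \<alpha>"
    have \<gamma>: "?\<gamma> \<in> exps n" using expo_diff_exps[OF assms(2)] .
    have \<beta>: "expo_add ?\<gamma> \<alpha> = \<beta>" using expo_add_diff[OF assms(3)] .
    note shifted = lm_lc_mono_smult[OF submodule_vecs[OF g(1)] g(2) \<gamma> g(3)]
    have "lc (mono_smult ?\<gamma> g) = ?c * \<sigma>pow \<beta> b"
      using shifted(2) g(4) sigma_pow_cab_commute[OF \<gamma> assms(1) bR] \<beta> by simp
    moreover have "mono_smult ?\<gamma> g \<in> M" unfolding mono_smult_def by (rule submodule_smult[OF g(1)])
    ultimately have "?c * \<sigma>pow \<beta> b \<in> lc_ideal (\<beta>, i)" using lc_idealI shifted(1) \<beta> by metis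
    moreover obtain v where v: "v \<in> R" "v * ?c = 1"
      using cab_unit[OF \<gamma> assms(1)] by (rule R_unit_left_inverse)
    ultimately have "v * (?c * \<sigma>pow \<beta> b) \<in> lc_ideal (\<beta>, i)"
      using left_ideal_lc_ideal unfolding left_ideal_def by blast
    then show ?thesis using v(2) bR by (simp add: base_lc_ideal_def mult.assoc[symmetric])
  qed
qed

lemma base_lc_ideal_finite_generators:
  assumes noeth: "left_noetherian R"
  obtains P where "\<And>i. finite (P i)"
    "\<And>i \<beta> s. (\<beta>, s) \<in> P i \<Longrightarrow> \<beta> \<in> exps n \<and> s \<in> base_lc_ideal i \<beta> \<and> s \<noteq> 0"
    "\<And>i \<alpha> b. \<alpha> \<in> exps n \<Longrightarrow> b \<in> base_lc_ideal i \<alpha> \<Longrightarrow> \<exists>r. (\<forall>t\<in>P i. r t \<in> R) \<and>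
       b = (\<Sum>(\<beta>, s)\<in>{(\<beta>, s)\<in>P i. expo_le \<beta> \<alpha>}. r (\<beta>, s) * s)"
proof -
  define generates where "generates i P \<longleftrightarrow> finite P \<and>
      (\<forall>(\<beta>, s)\<in>P. \<beta> \<in> exps n \<and> s \<in> base_lc_ideal i \<beta> \<and> s \<noteq> 0) \<and>
      (\<forall>\<alpha>\<in>exps n. \<forall>b\<in>base_lc_ideal i \<alpha>. \<exists>r. (\<forall>t\<in>P. r t \<in> R) \<and>
         b = (\<Sum>(\<beta>, s)\<in>{(\<beta>, s)\<in>P. expo_le \<beta> \<alpha>}. r (\<beta>, s) * s))" for i P
  have "\<forall>i. \<exists>P. generates i P"
  proof
    fix i
    have "\<forall>\<alpha>\<in>exps n. left_ideal R (base_lc_ideal i \<alpha>)"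
      and "\<forall>\<alpha>\<in>exps n. \<forall>\<beta>\<in>exps n. expo_le \<alpha> \<beta> \<longrightarrow> base_lc_ideal i \<alpha> \<subseteq> base_lc_ideal i \<beta>"
      using left_ideal_base_lc_ideal base_lc_ideal_mono by blast+
    then obtain P where P: "finite P"
      "\<And>\<beta> s. (\<beta>, s) \<in> P \<Longrightarrow> \<beta> \<in> exps n \<and> s \<in> base_lc_ideal i \<beta> \<and> s \<noteq> 0"
      "\<And>\<alpha> b. \<alpha> \<in> exps n \<Longrightarrow> b \<in> base_lc_ideal i \<alpha> \<Longrightarrow> \<exists>r. (\<forall>t\<in>P. r t \<in> R) \<and>
         b = (\<Sum>(\<beta>, s)\<in>{(\<beta>, s)\<in>P. expo_le \<beta> \<alpha>}. r (\<beta>, s) * s)"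
      by (rule monotone_left_ideals_finite_generators[OF noeth]) blast
    then have "generates i P" unfolding generates_def by (auto dest: P(2))
    then show "\<exists>P. generates i P" ..
  qed
  from choice[OF this] obtain P where gen: "generates i (P i)" for i by blast
  show thesis
  proof (rule that)
    show "finite (P i)" for i using gen[of i] by (simp add: generates_def)
    show "\<beta> \<in> exps n \<and> s \<in> base_lc_ideal i \<beta> \<and> s \<noteq> 0" if "(\<beta>, s) \<in> P i" for i \<beta> s
      using gen[of i] that unfolding generates_def by blast
    show "\<exists>r. (\<forall>t\<in>P i. r t \<in> R) \<and> b = (\<Sum>(\<beta>, s)\<in>{(\<beta>, s)\<in>P i. expo_le \<beta> \<alpha>}. r (\<beta>, s) * s)"
      if "\<alpha> \<in> exps n" "b \<in> base_lc_ideal i \<alpha>" for i \<alpha> b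
      using gen[of i] that unfolding generates_def by blast
  qed
qed

lemma lc_ideal_witnesses:
  obtains w where "\<And>i \<beta> s. s \<in> base_lc_ideal i \<beta> \<Longrightarrow> s \<noteq> 0 \<Longrightarrow>
    w i (\<beta>, s) \<in> M \<and> w i (\<beta>, s) \<noteq> (\<lambda>_. 0) \<and> lm (w i (\<beta>, s)) = (\<beta>, i) \<and> lc (w i (\<beta>, s)) = \<sigma>pow \<beta> s"
proof
  define w where
    "w i t = (SOME g. g \<in> M \<and> g \<noteq> (\<lambda>_. 0) \<and> lm g = (fst t, i) \<and> lc g = \<sigma>pow (fst t) (snd t))"
    for i t
  fix i \<beta> s assume "s \<in> base_lc_ideal i \<beta>" "s \<noteq> 0"
  then have "\<exists>g. g \<in> M \<and> g \<noteq> (\<lambda>_. 0) \<and> lm g = (\<beta>, i) \<and> lc g = \<sigma>pow \<beta> s"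
    using \<sigma>pow_nonzero by (auto simp: base_lc_ideal_def elim: lc_idealE)
  then show "w i (\<beta>, s) \<in> M \<and> w i (\<beta>, s) \<noteq> (\<lambda>_. 0) \<and> lm (w i (\<beta>, s)) = (\<beta>, i) \<and>
      lc (w i (\<beta>, s)) = \<sigma>pow \<beta> s"
    unfolding w_def fst_conv snd_conv by (rule someI_ex)
qed

lemma groebner_basis_exists:
  assumes noeth: "left_noetherian R"
  shows "\<exists>G. groebner_basis R x n m lem M G"
proof (cases "M = {\<lambda>_. 0}")
  case True
  then show ?thesis unfolding groebner_basis_def by simp
next
  case nonzero: False
  obtain f0 where f0: "f0 \<in> M" "f0 \<noteq> (\<lambda>_. 0)"
    using nonzero submodule by (auto simp: submodule_def)
  obtain P where P: "\<And>i. finite (P i)"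
    "\<And>i \<beta> s. (\<beta>, s) \<in> P i \<Longrightarrow> \<beta> \<in> exps n \<and> s \<in> base_lc_ideal i \<beta> \<and> s \<noteq> 0"
    "\<And>i \<alpha> b. \<alpha> \<in> exps n \<Longrightarrow> b \<in> base_lc_ideal i \<alpha> \<Longrightarrow> \<exists>r. (\<forall>t\<in>P i. r t \<in> R) \<and>
       b = (\<Sum>(\<beta>, s)\<in>{(\<beta>, s)\<in>P i. expo_le \<beta> \<alpha>}. r (\<beta>, s) * s)"
    using base_lc_ideal_finite_generators[OF noeth] by blast
  obtain w where w: "\<And>i \<beta> s. (\<beta>, s) \<in> P i \<Longrightarrow>
      w i (\<beta>, s) \<in> M - {\<lambda>_. 0} \<and> lm (w i (\<beta>, s)) = (\<beta>, i) \<and> lc (w i (\<beta>, s)) = \<sigma>pow \<beta> s"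
    using lc_ideal_witnesses P(2) by (metis Diff_iff singletonD)
  define G where "G = insert f0 (\<Union>i<m. w i ` P i)"
  have "finite G" "G \<noteq> {}" "G \<subseteq> M - {\<lambda>_. 0}" using P(1) w f0 unfolding G_def by auto
  moreover have "reducible R x n m lem G f" if f: "f \<in> M" "f \<noteq> (\<lambda>_. 0)" for f
  proof -
    obtain \<alpha> i where lm: "lm f = (\<alpha>, i)" by fastforce
    have \<alpha>: "\<alpha> \<in> exps n" "i < m" using lmV_mons[OF submodule_vecs[OF f(1)] f(2)] lm by (auto simp: mons_def)
    obtain b where b: "b \<in> R" "\<sigma>pow \<alpha> b = lc f"
      using \<sigma>pow_bij[of \<alpha>] lcV_in_R[of f] unfolding bij_betw_def by (metis imageE)
    then have "b \<in> base_lc_ideal i \<alpha>" using lc_idealI[OF f(1) lm] by (simp add: base_lc_ideal_def)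
    then obtain r where r: "\<forall>t\<in>P i. r t \<in> R" "b = (\<Sum>(\<beta>, s)\<in>{(\<beta>, s)\<in>P i. expo_le \<beta> \<alpha>}. r (\<beta>, s) * s)"
      using P(3)[OF \<alpha>(1)] by blast
    show ?thesis
    proof (rule reducible_by_lc_witnesses[where P = "P i" and w = "w i" and r = r])
      show "\<beta> \<in> exps n \<and> s \<in> R" if "(\<beta>, s) \<in> P i" for \<beta> s
        using P(2)[OF that] by (auto simp: base_lc_ideal_def)
      show "w i (\<beta>, s) \<in> G \<and> lm (w i (\<beta>, s)) = (\<beta>, i) \<and> lc (w i (\<beta>, s)) = \<sigma>pow \<beta> s"
        if "(\<beta>, s) \<in> P i" for \<beta> s
        using w[OF that] that \<alpha>(2) unfolding G_def by blast
    qed (use P(1) submodule_vecs f lm r b in auto)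
  qed
  ultimately have "groebner_basis R x n m lem M G" unfolding groebner_basis_def using nonzero by simp
  then show ?thesis by blast
qed

end

theorem corollary32:
  fixes R :: "'a::ring_1 set" and x :: "nat \<Rightarrow> 'a" and n m :: nat
    and le :: "expo \<Rightarrow> expo \<Rightarrow> bool"
    and lem :: "expo \<times> nat \<Rightarrow> expo \<times> nat \<Rightarrow> bool"
    and M :: "(nat \<Rightarrow> 'a) set"
  assumes "sigma_PBW R x n"
    and "quasi_commutative R x n"
    and "bijective_ext R x n"
    and "left_noetherian R"
    and "monomial_order_A R x n le"
    and "monomial_order_Am R x n le m lem"
    and "submodule m M"
  shows "\<exists>G. groebner_basis R x n m lem M G"
proof (cases "(1::'a) = 0")
  case True
  then have "f = (\<lambda>_. 0)" for f :: "nat \<Rightarrow> 'a" by (metis mult_1 mult_zero_left)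
  then have "M = {\<lambda>_. 0}" using assms(7) by (auto simp: submodule_def)
  then show ?thesis unfolding groebner_basis_def by simp
next
  case False
  interpret qc_bijective_pbw_submodule R x n m le lem M
    using assms False by unfold_locales auto
  show ?thesis using groebner_basis_exists[OF assms(4)] .
qed

end
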